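(* (a) Suppose $\hat\rho_{\rm loc}$ is a density matrix on $\mathcal H_{\rm loc}$ all of whose eigenvalues are nonzero. Then $\mathcal L(\hat\rho_{\rm loc}^{\otimes n})=0$ if and only if both of the following hold: (iii$'$) $\mathcal L_i(\hat\rho_{\rm loc})=0$ for all $i\in\Lambda$; (iv$'$) $[\hat H_{ij},(\hat\rho_{\rm loc})_i\otimes(\hat\rho_{\rm loc})_j]=0$ for all $(i,j)\in\Lambda_2$. (b) For an arbitrary density matrix $\hat\rho_{\rm loc}$ on $\mathcal H_{\rm loc}$ (not necessarily of full rank), if (iii$'$) and (iv$'$) both hold, then $\mathcal L(\hat\rho_{\rm loc}^{\otimes n})=0$.
   Context: Setting: a lattice of $n$ sites $\Lambda=\{1,\dots,n\}$, $\Lambda_2=\{(i,j):1\le i<j\le n\}$; each site carries a copy of a finite-dimensional Hilbert space $\mathcal H_{\rm loc}$ of dimension $d$, total space $\mathcal H=\mathcal H_{\rm loc}^{\otimes n}$; $X_i$ denotes a single-site operator $X$ acting on site $i$. Dynamics: GKSL equation $\frac{d\hat\rho}{dt}=\mathcal L(\hat\rho)=-i[\hat H,\hat\rho]+\sum_k\mathcal D_{\hat L_k}(\hat\rho)$, $\mathcal D_{\hat L}(\rho)=\hat L\rho\hat L^\dagger-\frac12\{\hat L^\dagger\hat L,\rho\}$. Every Lindblad operator acts on a single site; those on site $i$ are $\hat L_i^{(\alpha)}$, $\alpha\in\Gamma_i$. $\hat H$ is Hermitian and a sum of at most 2-site terms. With ${\rm Tr}_{\overline{ij}}$, ${\rm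 Tr}_{\overline i}$ the partial traces over all sites other than $i,j$, resp. other than $i$, define $\hat H_{ij}=\frac{{\rm Tr}_{\overline{ij}}[\hat H]}{d^{n-2}}-\frac{{\rm Tr}_{\overline i}[\hat H]}{d^{n-1}}-\frac{{\rm Tr}_{\overline j}[\hat H]}{d^{n-1}}+\frac{{\rm Tr}[\hat H]}{d^n}$ and $\hat H_i=\frac{{\rm Tr}_{\overline i}[\hat H]}{d^{n-1}}-\frac{{\rm Tr}[\hat H]}{d^n}$, so that $\hat H=\sum_{(i,j)\in\Lambda_2}\hat H_{ij}+\sum_i\hat H_i+d^{-n}{\rm Tr}[\hat H]$. The single-site superoperator is $\mathcal L_i(\bullet)=-i[\hat H_i,\bullet]+\sum_{\alpha\in\Gamma_i}\mathcal D_{\hat L_i^{(\alpha)}}(\bullet)$, so $\mathcal L=-i\sum_{(i,j)\in\Lambda_2}[\hat H_{ij},\cdot]+\sum_i\mathcal L_i$. *)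

theory Defs
  imports Complex_Main
begin

text \<open>
The local Hilbert space is C^d with basis indices 0..<d; a local operator is a
function lop = nat => nat => complex (matrix entries, only indices < d matter).
Sites are 0..<n (the paper's 1..n). The basis of the total space H_loc^{tensor n} is indexed
by configurations: lists of length n with entries < d. A global operator is a
function gop = nat list => nat list => complex (only configurations matter).
\<close>

type_synonym lop = "nat \<Rightarrow> nat \<Rightarrow> complex"
type_synonym gop = "nat list \<Rightarrow> nat list \<Rightarrow> complex"

definition cfgs :: "nat \<Rightarrow> nat \<Rightarrow> nat list set" where
  "cfgs n d = {xs. length xs = n \<and> set xs \<subseteq> {..<d}}"

definition lmult :: "nat \<Rightarrow> lop \<Rightarrow> lop \<Rightarrow> lop" where
  "lmult d A B = (\<lambda>a b. \<Sum>k<d. A a k * B k b)"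

definition ladj :: "lop \<Rightarrow> lop" where
  "ladj A = (\<lambda>a b. cnj (A b a))"

definition lcomm :: "nat \<Rightarrow> lop \<Rightarrow> lop \<Rightarrow> lop" where
  "lcomm d A B = (\<lambda>a b. lmult d A B a b - lmult d B A a b)"

definition ldiss :: "nat \<Rightarrow> lop \<Rightarrow> lop \<Rightarrow> lop" where
  "ldiss d L \<rho> = (\<lambda>a b. lmult d (lmult d L \<rho>) (ladj L) a b
      - (1/2) * (lmult d (lmult d (ladj L) L) \<rho> a b + lmult d \<rho> (lmult d (ladj L) L) a b))"

definition is_density :: "nat \<Rightarrow> lop \<Rightarrow> bool" where
  "is_density d \<rho> \<longleftrightarrow>
     (\<forall>a<d. \<forall>b<d. \<rho> b a = cnj (\<rho> a b)) \<and>
     (\<forall>v::nat \<Rightarrow> complex. let q = (\<Sum>a<d. \<Sum>b<d. cnj (v a) * \<rho> a b * v b) in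
          Im q = 0 \<and> Re q \<ge> 0) \<and>
     (\<Sum>a<d. \<rho> a a) = 1"

definition leigenvalue :: "nat \<Rightarrow> lop \<Rightarrow> complex \<Rightarrow> bool" where
  "leigenvalue d A \<mu> \<longleftrightarrow>
     (\<exists>v::nat \<Rightarrow> complex. (\<exists>b<d. v b \<noteq> 0) \<and> (\<forall>a<d. (\<Sum>b<d. A a b * v b) = \<mu> * v a))"

definition gmult :: "nat \<Rightarrow> nat \<Rightarrow> gop \<Rightarrow> gop \<Rightarrow> gop" where
  "gmult n d A B = (\<lambda>x y. \<Sum>z\<in>cfgs n d. A x z * B z y)"

definition gadj :: "gop \<Rightarrow> gop" where
  "gadj A = (\<lambda>x y. cnj (A y x))"

definition gcomm :: "nat \<Rightarrow> nat \<Rightarrow> gop \<Rightarrow> gop \<Rightarrow> gop" where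
  "gcomm n d A B = (\<lambda>x y. gmult n d A B x y - gmult n d B A x y)"

definition gdiss :: "nat \<Rightarrow> nat \<Rightarrow> gop \<Rightarrow> gop \<Rightarrow> gop" where
  "gdiss n d L \<rho> = (\<lambda>x y. gmult n d (gmult n d L \<rho>) (gadj L) x y
      - (1/2) * (gmult n d (gmult n d (gadj L) L) \<rho> x y + gmult n d \<rho> (gmult n d (gadj L) L) x y))"

definition gtrace :: "nat \<Rightarrow> nat \<Rightarrow> gop \<Rightarrow> complex" where
  "gtrace n d A = (\<Sum>x\<in>cfgs n d. A x x)"

definition agree_off :: "nat \<Rightarrow> nat set \<Rightarrow> nat list \<Rightarrow> nat list \<Rightarrow> bool" where
  "agree_off n S x y \<longleftrightarrow> (\<forall>k<n. k \<notin> S \<longrightarrow> x ! k = y ! k)"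

definition embed1 :: "nat \<Rightarrow> nat \<Rightarrow> lop \<Rightarrow> gop" where
  "embed1 n i X = (\<lambda>x y. if agree_off n {i} x y then X (x ! i) (y ! i) else 0)"

text \<open>X_i tensor Y_j (identity elsewhere), for i different from j.\<close>
definition embed2 :: "nat \<Rightarrow> nat \<Rightarrow> nat \<Rightarrow> lop \<Rightarrow> lop \<Rightarrow> gop" where
  "embed2 n i j X Y = (\<lambda>x y. if agree_off n {i, j} x y
       then X (x ! i) (y ! i) * Y (x ! j) (y ! j) else 0)"

definition tensor_pow :: "nat \<Rightarrow> lop \<Rightarrow> gop" where
  "tensor_pow n X = (\<lambda>x y. \<Prod>k<n. X (x ! k) (y ! k))"

definition merge :: "nat \<Rightarrow> nat set \<Rightarrow> nat list \<Rightarrow> nat list \<Rightarrow> nat list" where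
  "merge n S x z = map (\<lambda>k. if k \<in> S then x ! k else z ! k) [0..<n]"

definition compl_cfgs :: "nat \<Rightarrow> nat \<Rightarrow> nat set \<Rightarrow> nat list set" where
  "compl_cfgs n d S = {z \<in> cfgs n d. \<forall>k\<in>S. k < n \<longrightarrow> z ! k = 0}"

text \<open>(Tr_{complement of S}[A] / d^{n - |S|}) tensor identity on the complement of S,
  as an operator on the total space (S a subset of the sites).\<close>
definition ptr_embed :: "nat \<Rightarrow> nat \<Rightarrow> nat set \<Rightarrow> gop \<Rightarrow> gop" where
  "ptr_embed n d S A = (\<lambda>x y. if agree_off n S x y
      then (\<Sum>c\<in>compl_cfgs n d S. A (merge n S x c) (merge n S y c)) / of_nat d ^ (n - card S)
      else 0)"

definition Hpair :: "nat \<Rightarrow> nat \<Rightarrow> gop \<Rightarrow> nat \<Rightarrow> nat \<Rightarrow> gop" where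
  "Hpair n d H i j = (\<lambda>x y. ptr_embed n d {i, j} H x y - ptr_embed n d {i} H x y
      - ptr_embed n d {j} H x y + ptr_embed n d {} H x y)"

text \<open>H_i = Tr_{not i}[H]/d^{n-1} - Tr[H]/d^n, as a d x d matrix on site i.\<close>
definition Hsite :: "nat \<Rightarrow> nat \<Rightarrow> gop \<Rightarrow> nat \<Rightarrow> lop" where
  "Hsite n d H i = (\<lambda>a b.
      (\<Sum>c\<in>compl_cfgs n d {i}. H (c[i := a]) (c[i := b])) / of_nat d ^ (n - 1)
      - (if a = b then gtrace n d H / of_nat d ^ n else 0))"

definition acts_on :: "nat \<Rightarrow> nat \<Rightarrow> nat set \<Rightarrow> gop \<Rightarrow> bool" where
  "acts_on n d S A \<longleftrightarrow> (\<exists>a::gop. \<forall>x\<in>cfgs n d. \<forall>y\<in>cfgs n d.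
      A x y = (if agree_off n S x y
               then a (map (\<lambda>k. if k \<in> S then x ! k else 0) [0..<n])
                      (map (\<lambda>k. if k \<in> S then y ! k else 0) [0..<n])
               else 0))"

definition two_local :: "nat \<Rightarrow> nat \<Rightarrow> gop \<Rightarrow> bool" where
  "two_local n d H \<longleftrightarrow> (\<exists>(c::complex) (T::nat \<Rightarrow> nat \<Rightarrow> gop).
      (\<forall>i<n. \<forall>j<n. acts_on n d {i, j} (T i j)) \<and>
      (\<forall>x\<in>cfgs n d. \<forall>y\<in>cfgs n d.
         H x y = (if x = y then c else 0) + (\<Sum>i<n. \<Sum>j<n. T i j x y)))"

definition ghermitian :: "nat \<Rightarrow> nat \<Rightarrow> gop \<Rightarrow> bool" where
  "ghermitian n d H \<longleftrightarrow> (\<forall>x\<in>cfgs n d. \<forall>y\<in>cfgs n d. H y x = cnj (H x y))"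

definition GKSL :: "nat \<Rightarrow> nat \<Rightarrow> gop \<Rightarrow> (nat \<Rightarrow> 'g set) \<Rightarrow> (nat \<Rightarrow> 'g \<Rightarrow> lop) \<Rightarrow> gop \<Rightarrow> gop" where
  "GKSL n d H Gam Lop \<rho> = (\<lambda>x y. - \<i> * gcomm n d H \<rho> x y
      + (\<Sum>i<n. \<Sum>\<alpha>\<in>Gam i. gdiss n d (embed1 n i (Lop i \<alpha>)) \<rho> x y))"

definition Lsite :: "nat \<Rightarrow> nat \<Rightarrow> gop \<Rightarrow> (nat \<Rightarrow> 'g set) \<Rightarrow> (nat \<Rightarrow> 'g \<Rightarrow> lop) \<Rightarrow> nat \<Rightarrow> lop \<Rightarrow> lop" where
  "Lsite n d H Gam Lop i \<rho> = (\<lambda>a b. - \<i> * lcomm d (Hsite n d H i) \<rho> a b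
      + (\<Sum>\<alpha>\<in>Gam i. ldiss d (Lop i \<alpha>) \<rho> a b))"

definition gzero :: "nat \<Rightarrow> nat \<Rightarrow> gop \<Rightarrow> bool" where
  "gzero n d A \<longleftrightarrow> (\<forall>x\<in>cfgs n d. \<forall>y\<in>cfgs n d. A x y = 0)"

definition lzero :: "nat \<Rightarrow> lop \<Rightarrow> bool" where
  "lzero d A \<longleftrightarrow> (\<forall>a<d. \<forall>b<d. A a b = 0)"

definition cond_iii :: "nat \<Rightarrow> nat \<Rightarrow> gop \<Rightarrow> (nat \<Rightarrow> 'g set) \<Rightarrow> (nat \<Rightarrow> 'g \<Rightarrow> lop) \<Rightarrow> lop \<Rightarrow> bool" where
  "cond_iii n d H Gam Lop \<rho> \<longleftrightarrow> (\<forall>i<n. lzero d (Lsite n d H Gam Lop i \<rho>))"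

definition cond_iv :: "nat \<Rightarrow> nat \<Rightarrow> gop \<Rightarrow> lop \<Rightarrow> bool" where
  "cond_iv n d H \<rho> \<longleftrightarrow> (\<forall>i j. i < j \<and> j < n \<longrightarrow>
      gzero n d (gcomm n d (Hpair n d H i j) (embed2 n i j \<rho> \<rho>)))"

end

theory Submission
  imports Defs "Jordan_Normal_Form.Determinant"
begin

text \<open>
  Split \<open>H\<close> by inclusion-exclusion over its normalised partial traces into pair terms
  \<open>H\<^sub>i\<^sub>j\<close>, site terms \<open>H\<^sub>i\<close> and a multiple of the identity. On the product state the site terms
  and the dissipators contribute \<open>\<Sum>\<^sub>i (\<L>\<^sub>i \<rho>)\<^sub>i\<close> tensored with \<open>\<rho>\<close> on the other sites, and since
  \<open>H\<^sub>i\<^sub>j\<close> acts only on \<open>i\<close> and \<open>j\<close>, \<open>[H\<^sub>i\<^sub>j, \<rho>\<^sup>\<otimes>\<^sup>n]\<close> is \<open>[H\<^sub>i\<^sub>j, \<rho>\<^sub>i \<otimes> \<rho>\<^sub>j]\<close> times \<open>\<rho>\<close> on the other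
  sites; this gives (b). For (a), multiply the generator by \<open>\<rho>\<inverse>\<close> on the sites outside a set \<open>S\<close>
  and trace them out. \<open>H\<^sub>i\<^sub>j\<close> has vanishing partial trace onto every set missing \<open>i\<close> or \<open>j\<close>, so for
  \<open>S = {k}\<close> only \<open>\<L>\<^sub>k \<rho> + c \<rho>\<close> survives, whose trace shows \<open>c = 0\<close>, and then for \<open>S = {i, j}\<close>
  only \<open>[H\<^sub>i\<^sub>j, \<rho>\<^sub>i \<otimes> \<rho>\<^sub>j]\<close> survives.
\<close>

section \<open>Configurations\<close>

lemma cfgs_0: "cfgs 0 d = {[]}"
  by (auto simp: cfgs_def)

lemma cfgs_Suc: "cfgs (Suc n) d = (\<lambda>(a, xs). a # xs) ` ({..<d} \<times> cfgs n d)"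
proof (rule Set.set_eqI, rule iffI)
  fix xs assume "xs \<in> cfgs (Suc n) d"
  then show "xs \<in> (\<lambda>(a, xs). a # xs) ` ({..<d} \<times> cfgs n d)"
    by (cases xs) (auto simp: cfgs_def image_iff)
qed (auto simp: cfgs_def)

lemma finite_cfgs [simp]: "finite (cfgs n d)"
  by (induction n) (auto simp: cfgs_Suc cfgs_0)

lemma mem_cfgs_iff: "x \<in> cfgs n d \<longleftrightarrow> length x = n \<and> (\<forall>l<n. x ! l < d)"
  by (auto simp: cfgs_def subset_iff in_set_conv_nth)

lemma cfgs_length: "x \<in> cfgs n d \<Longrightarrow> length x = n"
  by (simp add: mem_cfgs_iff)

lemma cfgs_nth: "x \<in> cfgs n d \<Longrightarrow> l < n \<Longrightarrow> x ! l < d"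
  by (simp add: mem_cfgs_iff)

lemma sum_cfgs_prod:
  "(\<Sum>c\<in>cfgs n d. \<Prod>l<n. h l (c ! l)) = (\<Prod>l<n. \<Sum>u<d. (h l u :: complex))"
proof (induction n arbitrary: h)
  case 0
  then show ?case by (simp add: cfgs_0)
next
  case (Suc n)
  have inj: "inj_on (\<lambda>(a, xs). a # xs) ({..<d} \<times> cfgs n d)"
    by (auto simp: inj_on_def)
  have "(\<Sum>c\<in>cfgs (Suc n) d. \<Prod>l<Suc n. h l (c ! l))
      = (\<Sum>a<d. \<Sum>xs\<in>cfgs n d. h 0 a * (\<Prod>l<n. h (Suc l) (xs ! l)))"
    unfolding cfgs_Suc sum.reindex[OF inj] sum.cartesian_product
    by (simp add: prod.lessThan_Suc_shift case_prod_beta del: prod.lessThan_Suc)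
  also have "\<dots> = (\<Sum>a<d. h 0 a) * (\<Prod>l<n. \<Sum>u<d. h (Suc l) u)"
    by (simp add: sum_distrib_left[symmetric] sum_distrib_right Suc.IH[of "\<lambda>l. h (Suc l)"])
  also have "\<dots> = (\<Prod>l<Suc n. \<Sum>u<d. h l u)"
    by (simp add: prod.lessThan_Suc_shift del: prod.lessThan_Suc)
  finally show ?case .
qed

lemma prod_if_one_zero:
  "finite I \<Longrightarrow> (\<Prod>l\<in>I. if P l then 1 else (0::complex)) = (if \<forall>l\<in>I. P l then 1 else 0)"
  by (induction rule: finite_induct) auto

section \<open>Single-site matrices\<close>

definition lscalar :: "complex \<Rightarrow> lop" where
  "lscalar c = (\<lambda>a b. if a = b then c else 0)"

abbreviation lid :: lop where
  "lid \<equiv> lscalar 1"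

lemma lscalar_apply: "lscalar c a b = (if a = b then c else 0)"
  by (simp add: lscalar_def)

definition ltr :: "nat \<Rightarrow> lop \<Rightarrow> complex" where
  "ltr d A = (\<Sum>a<d. A a a)"

definition lunit :: "nat \<Rightarrow> nat \<Rightarrow> lop" where
  "lunit a b = (\<lambda>u v. if u = a \<and> v = b then 1 else 0)"

lemma lmult_assoc: "lmult d (lmult d A B) C = lmult d A (lmult d B C)"
  unfolding lmult_def
  by (intro ext) (simp add: sum_distrib_left sum_distrib_right mult.assoc, rule sum.swap)

lemma ltr_lmult_commute: "ltr d (lmult d A B) = ltr d (lmult d B A)"
  unfolding ltr_def lmult_def by (subst sum.swap) (simp add: mult.commute)

lemma lmult_lscalar_left [simp]: "a < d \<Longrightarrow> lmult d (lscalar c) X a b = c * X a b"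
  by (simp add: lmult_def lscalar_def if_distrib[of "\<lambda>t. t * _"] cong: if_cong)

lemma lmult_lscalar_right [simp]: "b < d \<Longrightarrow> lmult d X (lscalar c) a b = c * X a b"
  by (simp add: lmult_def lscalar_def if_distrib[of "\<lambda>t. _ * t"] mult.commute cong: if_cong)

lemma lmult_lscalar_middle [simp]:
  "lmult d (lmult d X (lscalar c)) Y = (\<lambda>a b. c * lmult d X Y a b)"
proof (intro ext)
  fix a b
  have "lmult d (lmult d X (lscalar c)) Y a b = (\<Sum>k<d. c * (X a k * Y k b))"
    unfolding lmult_def[of d "lmult d X (lscalar c)"] by (intro sum.cong) auto
  then show "lmult d (lmult d X (lscalar c)) Y a b = c * lmult d X Y a b"
    by (simp add: lmult_def sum_distrib_left)
qed

lemma ltr_lscalar [simp]: "ltr d (lscalar c) = of_nat d * c"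
  by (simp add: ltr_def lscalar_def)

lemma ltr_cong: "(\<And>a. a < d \<Longrightarrow> A a a = B a a) \<Longrightarrow> ltr d A = ltr d B"
  by (simp add: ltr_def)

lemma lmult_cong:
  "(\<And>k. k < d \<Longrightarrow> A a k = A' a k) \<Longrightarrow> (\<And>k. k < d \<Longrightarrow> B k b = B' k b) \<Longrightarrow>
   lmult d A B a b = lmult d A' B' a b"
  by (simp add: lmult_def)

lemma lmult_inverse_cancel_right:
  assumes inv: "\<And>a b. a < d \<Longrightarrow> b < d \<Longrightarrow> lmult d P Q a b = lid a b" and b: "b < d"
  shows "lmult d (lmult d F P) Q a b = F a b"
proof -
  have "lmult d (lmult d F P) Q a b = lmult d F (lmult d P Q) a b"
    by (simp add: lmult_assoc)
  also have "\<dots> = lmult d F lid a b"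
    using inv b by (intro lmult_cong) auto
  finally show ?thesis using b by simp
qed

lemma ltr_lcomm [simp]: "ltr d (lcomm d A B) = 0"
  using ltr_lmult_commute[of d A B] by (simp add: ltr_def lcomm_def sum_subtractf)

lemma ltr_ldiss [simp]: "ltr d (ldiss d L \<rho>) = 0"
proof -
  have "ltr d (lmult d (lmult d L \<rho>) (ladj L)) = ltr d (lmult d (ladj L) (lmult d L \<rho>))"
    by (rule ltr_lmult_commute)
  also have "\<dots> = ltr d (lmult d (lmult d (ladj L) L) \<rho>)"
    by (simp only: lmult_assoc)
  finally have "ltr d (lmult d (lmult d L \<rho>) (ladj L)) = ltr d (lmult d (lmult d (ladj L) L) \<rho>)" .
  moreover have "ltr d (lmult d \<rho> (lmult d (ladj L) L)) = ltr d (lmult d (lmult d (ladj L) L) \<rho>)"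
    by (rule ltr_lmult_commute)
  moreover have "ltr d (ldiss d L \<rho>) = ltr d (lmult d (lmult d L \<rho>) (ladj L))
      - (1/2) * (ltr d (lmult d (lmult d (ladj L) L) \<rho>) + ltr d (lmult d \<rho> (lmult d (ladj L) L)))"
    by (simp only: ltr_def ldiss_def sum_subtractf sum_distrib_left[symmetric] sum.distrib)
  ultimately show ?thesis
    by simp
qed

section \<open>Operators on the chain\<close>

text \<open>Operators are functions on all lists, but only their entries at configurations are
  meaningful.\<close>

definition geq :: "nat \<Rightarrow> nat \<Rightarrow> gop \<Rightarrow> gop \<Rightarrow> bool" where
  "geq n d A B \<longleftrightarrow> (\<forall>x\<in>cfgs n d. \<forall>y\<in>cfgs n d. A x y = B x y)"

lemma geqI: "(\<And>x y. x \<in> cfgs n d \<Longrightarrow> y \<in> cfgs n d \<Longrightarrow> A x y = B x y) \<Longrightarrow> geq n d A B"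
  by (simp add: geq_def)

lemma geqD: "geq n d A B \<Longrightarrow> x \<in> cfgs n d \<Longrightarrow> y \<in> cfgs n d \<Longrightarrow> A x y = B x y"
  by (simp add: geq_def)

lemma geq_refl [simp]: "geq n d A A"
  by (simp add: geq_def)

lemma geq_sym: "geq n d A B \<Longrightarrow> geq n d B A"
  by (simp add: geq_def)

lemma geq_trans [trans]: "geq n d A B \<Longrightarrow> geq n d B C \<Longrightarrow> geq n d A C"
  by (simp add: geq_def)

lemma geq_zero_iff_gzero: "geq n d A (\<lambda>x y. 0) \<longleftrightarrow> gzero n d A"
  by (simp add: geq_def gzero_def)

lemma geq_add:
  "geq n d A A' \<Longrightarrow> geq n d B B' \<Longrightarrow> geq n d (\<lambda>x y. A x y + B x y) (\<lambda>x y. A' x y + B' x y)"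
  by (simp add: geq_def)

lemma geq_diff:
  "geq n d A A' \<Longrightarrow> geq n d B B' \<Longrightarrow> geq n d (\<lambda>x y. A x y - B x y) (\<lambda>x y. A' x y - B' x y)"
  by (simp add: geq_def)

lemma geq_scale: "geq n d A B \<Longrightarrow> geq n d (\<lambda>x y. c * A x y) (\<lambda>x y. c * B x y)"
  by (simp add: geq_def)

lemma geq_sum:
  "(\<And>p. p \<in> I \<Longrightarrow> geq n d (F p) (G p)) \<Longrightarrow>
   geq n d (\<lambda>x y. \<Sum>p\<in>I. F p x y) (\<lambda>x y. \<Sum>p\<in>I. G p x y)"
  by (auto simp: geq_def intro!: sum.cong)

lemma gmult_cong_left: "geq n d A A' \<Longrightarrow> geq n d (gmult n d A B) (gmult n d A' B)"
  by (simp add: geq_def gmult_def)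

lemma gmult_cong_right: "geq n d B B' \<Longrightarrow> geq n d (gmult n d A B) (gmult n d A B')"
  by (simp add: geq_def gmult_def)

lemma gcomm_cong_left: "geq n d A A' \<Longrightarrow> geq n d (gcomm n d A B) (gcomm n d A' B)"
  by (simp add: geq_def gcomm_def gmult_def)

lemma gcomm_cong_right: "geq n d B B' \<Longrightarrow> geq n d (gcomm n d A B) (gcomm n d A B')"
  by (simp add: geq_def gcomm_def gmult_def)

lemma ptr_embed_cong: "geq n d A B \<Longrightarrow> geq n d (ptr_embed n d S A) (ptr_embed n d S B)"
  by (auto simp: geq_def ptr_embed_def compl_cfgs_def merge_def mem_cfgs_iff intro!: sum.cong)

lemma gmult_zero_left [simp]: "gmult n d (\<lambda>x y. 0) B = (\<lambda>x y. 0)"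
  by (simp add: gmult_def)

lemma gcomm_zero_left [simp]: "gcomm n d (\<lambda>x y. 0) B = (\<lambda>x y. 0)"
  by (simp add: gcomm_def gmult_def)

lemma gmult_add_left:
  "gmult n d (\<lambda>x y. A x y + B x y) C = (\<lambda>x y. gmult n d A C x y + gmult n d B C x y)"
  by (auto simp: gmult_def algebra_simps sum.distrib)

lemma gmult_diff_left:
  "gmult n d (\<lambda>x y. A x y - B x y) C = (\<lambda>x y. gmult n d A C x y - gmult n d B C x y)"
  by (auto simp: gmult_def algebra_simps sum_subtractf)

lemma gmult_scale_left: "gmult n d (\<lambda>x y. c * A x y) B = (\<lambda>x y. c * gmult n d A B x y)"
  unfolding gmult_def by (intro ext) (simp add: sum_distrib_left mult.assoc)

lemma gmult_sum_left:
  "gmult n d (\<lambda>x y. \<Sum>k\<in>K. G k x y) B = (\<lambda>x y. \<Sum>k\<in>K. gmult n d (G k) B x y)"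
  unfolding gmult_def by (intro ext) (simp add: sum_distrib_right, rule sum.swap)

lemma gmult_sum_right:
  "gmult n d B (\<lambda>x y. \<Sum>k\<in>K. G k x y) = (\<lambda>x y. \<Sum>k\<in>K. gmult n d B (G k) x y)"
  unfolding gmult_def by (intro ext) (simp add: sum_distrib_left, rule sum.swap)

lemma gcomm_add_left:
  "gcomm n d (\<lambda>x y. A x y + C x y) B = (\<lambda>x y. gcomm n d A B x y + gcomm n d C B x y)"
  by (intro ext) (simp add: gcomm_def gmult_def sum.distrib algebra_simps)

lemma gcomm_sum_left:
  "gcomm n d (\<lambda>x y. \<Sum>k\<in>K. G k x y) B = (\<lambda>x y. \<Sum>k\<in>K. gcomm n d (G k) B x y)"
  unfolding gcomm_def gmult_sum_left gmult_sum_right by (simp add: sum_subtractf)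

lemma ptr_embed_add:
  "ptr_embed n d S (\<lambda>x y. A x y + B x y) = (\<lambda>x y. ptr_embed n d S A x y + ptr_embed n d S B x y)"
  by (intro ext) (auto simp: ptr_embed_def sum.distrib add_divide_distrib)

lemma ptr_embed_diff:
  "ptr_embed n d S (\<lambda>x y. A x y - B x y) = (\<lambda>x y. ptr_embed n d S A x y - ptr_embed n d S B x y)"
  by (intro ext) (auto simp: ptr_embed_def sum_subtractf diff_divide_distrib)

lemma ptr_embed_scale:
  "ptr_embed n d S (\<lambda>x y. c * A x y) = (\<lambda>x y. c * ptr_embed n d S A x y)"
  unfolding ptr_embed_def by (intro ext) (auto simp: sum_distrib_left)

lemma ptr_embed_sum:
  "ptr_embed n d S (\<lambda>x y. \<Sum>k\<in>K. G k x y) = (\<lambda>x y. \<Sum>k\<in>K. ptr_embed n d S (G k) x y)"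
  unfolding ptr_embed_def
  by (intro ext) (auto simp: sum_divide_distrib[symmetric] intro: sum.swap)

lemma ptr_embed_zero [simp]: "ptr_embed n d S (\<lambda>x y. 0) = (\<lambda>x y. 0)"
  by (intro ext) (simp add: ptr_embed_def)

definition tensor_prod :: "nat \<Rightarrow> (nat \<Rightarrow> lop) \<Rightarrow> gop" where
  "tensor_prod n f = (\<lambda>x y. \<Prod>l<n. f l (x ! l) (y ! l))"

definition tensor_split :: "nat \<Rightarrow> nat set \<Rightarrow> lop \<Rightarrow> lop \<Rightarrow> gop" where
  "tensor_split n S X Y = tensor_prod n (\<lambda>l. if l \<in> S then X else Y)"

lemma tensor_pow_eq_tensor_prod: "tensor_pow n \<rho> = tensor_prod n (\<lambda>_. \<rho>)"
  by (simp add: tensor_pow_def tensor_prod_def)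

lemma gmult_tensor_prod:
  "gmult n d (tensor_prod n f) (tensor_prod n g) = tensor_prod n (\<lambda>l. lmult d (f l) (g l))"
proof (intro ext)
  fix x y
  have "gmult n d (tensor_prod n f) (tensor_prod n g) x y
      = (\<Sum>z\<in>cfgs n d. \<Prod>l<n. f l (x ! l) (z ! l) * g l (z ! l) (y ! l))"
    by (simp add: gmult_def tensor_prod_def prod.distrib)
  also have "\<dots> = (\<Prod>l<n. \<Sum>u<d. f l (x ! l) u * g l u (y ! l))"
    by (rule sum_cfgs_prod)
  finally show "gmult n d (tensor_prod n f) (tensor_prod n g) x y
      = tensor_prod n (\<lambda>l. lmult d (f l) (g l)) x y"
    by (simp add: tensor_prod_def lmult_def)
qed

lemma gcomm_tensor_prod:
  "gcomm n d (tensor_prod n f) (tensor_prod n g) =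
   (\<lambda>x y. tensor_prod n (\<lambda>l. lmult d (f l) (g l)) x y - tensor_prod n (\<lambda>l. lmult d (g l) (f l)) x y)"
  by (simp add: gcomm_def gmult_tensor_prod)

lemma tensor_prod_cong:
  assumes "\<And>l a b. l < n \<Longrightarrow> a < d \<Longrightarrow> b < d \<Longrightarrow> f l a b = g l a b"
  shows "geq n d (tensor_prod n f) (tensor_prod n g)"
  using assms by (auto simp: geq_def tensor_prod_def cfgs_nth intro!: prod.cong)

lemma tensor_prod_remove:
  "p < n \<Longrightarrow> tensor_prod n f x y = f p (x ! p) (y ! p) * (\<Prod>l\<in>{..<n}-{p}. f l (x ! l) (y ! l))"
  unfolding tensor_prod_def by (simp add: prod.remove[of "{..<n}" p])

lemma tensor_split_site:
  assumes "p < n"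
  shows "tensor_split n {p} X Y x y = X (x ! p) (y ! p) * (\<Prod>l\<in>{..<n}-{p}. Y (x ! l) (y ! l))"
proof -
  have "(\<Prod>l\<in>{..<n}-{p}. (if l \<in> {p} then X else Y) (x ! l) (y ! l))
      = (\<Prod>l\<in>{..<n}-{p}. Y (x ! l) (y ! l))"
    by (rule prod.cong) auto
  then show ?thesis
    unfolding tensor_split_def tensor_prod_remove[OF assms] by simp
qed

lemma tensor_prod_lid:
  assumes "x \<in> cfgs n d" "y \<in> cfgs n d"
  shows "tensor_prod n (\<lambda>_. lid) x y = (if x = y then 1 else 0)"
proof -
  have "tensor_prod n (\<lambda>_. lid) x y = (if \<forall>l\<in>{..<n}. x ! l = y ! l then 1 else 0)"
    unfolding tensor_prod_def lscalar_def by (rule prod_if_one_zero) simp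
  also have "(\<forall>l\<in>{..<n}. x ! l = y ! l) \<longleftrightarrow> x = y"
    using assms by (auto simp: mem_cfgs_iff list_eq_iff_nth_eq)
  finally show ?thesis .
qed

lemma tensor_prod_lunit:
  assumes "length x = n" "length y = n" "length u = n" "length v = n"
  shows "tensor_prod n (\<lambda>l. lunit (u ! l) (v ! l)) x y = (if x = u \<and> y = v then 1 else 0)"
proof -
  have "tensor_prod n (\<lambda>l. lunit (u ! l) (v ! l)) x y
      = (if \<forall>l\<in>{..<n}. x ! l = u ! l \<and> y ! l = v ! l then 1 else 0)"
    unfolding tensor_prod_def lunit_def by (rule prod_if_one_zero) simp
  also have "(\<forall>l\<in>{..<n}. x ! l = u ! l \<and> y ! l = v ! l) \<longleftrightarrow> x = u \<and> y = v"
    using assms by (auto simp: list_eq_iff_nth_eq)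
  finally show ?thesis .
qed

lemma geq_sum_lunit:
  "geq n d A (\<lambda>x y. \<Sum>p\<in>cfgs n d \<times> cfgs n d.
      A (fst p) (snd p) * tensor_prod n (\<lambda>l. lunit (fst p ! l) (snd p ! l)) x y)"
proof (rule geqI)
  fix x y assume x: "x \<in> cfgs n d" and y: "y \<in> cfgs n d"
  have "(\<Sum>p\<in>cfgs n d \<times> cfgs n d. A (fst p) (snd p) * tensor_prod n (\<lambda>l. lunit (fst p ! l) (snd p ! l)) x y)
      = (\<Sum>p\<in>cfgs n d \<times> cfgs n d. if p = (x, y) then A x y else 0)"
  proof (intro sum.cong refl)
    fix p assume "p \<in> cfgs n d \<times> cfgs n d"
    then show "A (fst p) (snd p) * tensor_prod n (\<lambda>l. lunit (fst p ! l) (snd p ! l)) x y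
        = (if p = (x, y) then A x y else 0)"
      using x y by (cases p) (auto simp: tensor_prod_lunit cfgs_length)
  qed
  then show "A x y = (\<Sum>p\<in>cfgs n d \<times> cfgs n d.
      A (fst p) (snd p) * tensor_prod n (\<lambda>l. lunit (fst p ! l) (snd p ! l)) x y)"
    using x y by simp
qed

definition glinear :: "nat \<Rightarrow> nat \<Rightarrow> (gop \<Rightarrow> gop) \<Rightarrow> bool" where
  "glinear n d F \<longleftrightarrow> (\<forall>A B. geq n d A B \<longrightarrow> geq n d (F A) (F B)) \<and>
     (\<forall>c A B. geq n d (F (\<lambda>x y. A x y + c * B x y)) (\<lambda>x y. F A x y + c * F B x y))"

lemma glinear_cong: "glinear n d F \<Longrightarrow> geq n d A B \<Longrightarrow> geq n d (F A) (F B)"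
  by (simp add: glinear_def)

lemma glinear_combination:
  "glinear n d F \<Longrightarrow> geq n d (F (\<lambda>x y. A x y + c * B x y)) (\<lambda>x y. F A x y + c * F B x y)"
  by (simp add: glinear_def)

lemma glinear_zero:
  assumes "glinear n d F"
  shows "geq n d (F (\<lambda>x y. 0)) (\<lambda>x y. 0)"
  using glinear_combination[OF assms, of "\<lambda>x y. 0" "-1" "\<lambda>x y. 0"] by simp

lemma glinear_scale:
  assumes F: "glinear n d F"
  shows "geq n d (F (\<lambda>x y. c * B x y)) (\<lambda>x y. c * F B x y)"
  using glinear_combination[OF F, of "\<lambda>x y. 0" c B] glinear_zero[OF F] by (simp add: geq_def)

lemma glinear_sum:
  assumes F: "glinear n d F" and I: "finite I"
  shows "geq n d (F (\<lambda>x y. \<Sum>p\<in>I. G p x y)) (\<lambda>x y. \<Sum>p\<in>I. F (G p) x y)"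
  using I
proof (induction rule: finite_induct)
  case empty
  then show ?case using glinear_zero[OF F] by simp
next
  case (insert p I)
  have "geq n d (F (\<lambda>x y. \<Sum>p\<in>insert p I. G p x y))
                (F (\<lambda>x y. G p x y + 1 * (\<Sum>p\<in>I. G p x y)))"
    using insert by simp
  also have "geq n d \<dots> (\<lambda>x y. F (G p) x y + 1 * F (\<lambda>x y. \<Sum>p\<in>I. G p x y) x y)"
    by (rule glinear_combination[OF F])
  also have "geq n d \<dots> (\<lambda>x y. \<Sum>p\<in>insert p I. F (G p) x y)"
    using insert by (auto simp: geq_def)
  finally show ?case .
qed

lemma glinear_comp: "glinear n d F \<Longrightarrow> glinear n d G \<Longrightarrow> glinear n d (\<lambda>A. F (G A))"
  unfolding glinear_def by (meson geq_trans)

lemma glinear_diff: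
  assumes F: "glinear n d F" and G: "glinear n d G"
  shows "glinear n d (\<lambda>A x y. F A x y - G A x y)"
  unfolding glinear_def
proof (intro conjI allI impI)
  fix A B assume "geq n d A B"
  then show "geq n d (\<lambda>x y. F A x y - G A x y) (\<lambda>x y. F B x y - G B x y)"
    by (intro geq_diff glinear_cong[OF F] glinear_cong[OF G])
next
  fix c A B
  show "geq n d (\<lambda>x y. F (\<lambda>x y. A x y + c * B x y) x y - G (\<lambda>x y. A x y + c * B x y) x y)
      (\<lambda>x y. F A x y - G A x y + c * (F B x y - G B x y))"
    using glinear_combination[OF F, of A c B] glinear_combination[OF G, of A c B]
    by (simp add: geq_def algebra_simps)
qed

lemma glinear_gmult_left: "glinear n d (\<lambda>A. gmult n d A B)"
  unfolding glinear_def
  by (auto simp: geq_def gmult_def sum.distrib sum_distrib_left algebra_simps intro!: sum.cong)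

lemma glinear_gmult_right: "glinear n d (\<lambda>A. gmult n d B A)"
  unfolding glinear_def
  by (auto simp: geq_def gmult_def sum.distrib sum_distrib_left algebra_simps intro!: sum.cong)

lemma glinear_gcomm_left: "glinear n d (\<lambda>A. gcomm n d A B)"
  unfolding gcomm_def by (intro glinear_diff glinear_gmult_left glinear_gmult_right)

lemma glinear_ptr_embed: "glinear n d (ptr_embed n d S)"
  unfolding glinear_def
  by (simp add: ptr_embed_cong ptr_embed_add ptr_embed_scale)

text \<open>The matrix units span all operators, so a linear map is determined by its values
  on tensor products.\<close>

lemma glinear_eq_tensor_prod:
  assumes F: "glinear n d F" and G: "glinear n d G"
    and eq: "\<And>f. geq n d (F (tensor_prod n f)) (G (tensor_prod n f))"
  shows "geq n d (F A) (G A)"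
proof -
  let ?U = "\<lambda>p. tensor_prod n (\<lambda>l. lunit (fst p ! l) (snd p ! l))"
  let ?E = "\<lambda>x y. \<Sum>p\<in>cfgs n d \<times> cfgs n d. A (fst p) (snd p) * ?U p x y"
  have "geq n d (F A) (F ?E)"
    by (rule glinear_cong[OF F geq_sum_lunit])
  also have "geq n d \<dots> (\<lambda>x y. \<Sum>p\<in>cfgs n d \<times> cfgs n d. F (\<lambda>x y. A (fst p) (snd p) * ?U p x y) x y)"
    by (rule glinear_sum[OF F]) simp
  also have "geq n d \<dots> (\<lambda>x y. \<Sum>p\<in>cfgs n d \<times> cfgs n d. G (\<lambda>x y. A (fst p) (snd p) * ?U p x y) x y)"
    using glinear_scale[OF F] glinear_scale[OF G] eq by (auto simp: geq_def intro!: sum.cong)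
  also have "geq n d \<dots> (G ?E)"
    by (rule geq_sym, rule glinear_sum[OF G]) simp
  also have "geq n d \<dots> (G A)"
    by (rule glinear_cong[OF G geq_sym[OF geq_sum_lunit]])
  finally show ?thesis .
qed

section \<open>Partial traces\<close>

lemma merge_nth: "l < n \<Longrightarrow> merge n S x c ! l = (if l \<in> S then x ! l else c ! l)"
  by (simp add: merge_def)

lemma sum_compl_cfgs_prod:
  assumes d: "0 < d"
  shows "(\<Sum>c\<in>compl_cfgs n d S. \<Prod>l<n. h l (c ! l)) =
         (\<Prod>l<n. if l \<in> S then h l 0 else (\<Sum>u<d. (h l u :: complex)))"
proof -
  let ?h = "\<lambda>l u. if l \<in> S \<and> u \<noteq> 0 then 0 else h l u"
  have sub: "compl_cfgs n d S \<subseteq> cfgs n d"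
    by (auto simp: compl_cfgs_def)
  have "(\<Sum>c\<in>compl_cfgs n d S. \<Prod>l<n. h l (c ! l)) = (\<Sum>c\<in>compl_cfgs n d S. \<Prod>l<n. ?h l (c ! l))"
    by (rule sum.cong) (auto simp: compl_cfgs_def intro!: prod.cong)
  also have "\<dots> = (\<Sum>c\<in>cfgs n d. \<Prod>l<n. ?h l (c ! l))"
  proof (rule sum.mono_neutral_left[OF finite_cfgs sub], rule ballI)
    fix c assume "c \<in> cfgs n d - compl_cfgs n d S"
    then obtain k where k: "k \<in> S" "k < n" "c ! k \<noteq> 0"
      by (auto simp: compl_cfgs_def)
    then show "(\<Prod>l<n. ?h l (c ! l)) = 0"
      by (intro prod_zero) (auto intro!: bexI[of _ k])
  qed
  also have "\<dots> = (\<Prod>l<n. \<Sum>u<d. ?h l u)"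
    by (rule sum_cfgs_prod)
  also have "\<dots> = (\<Prod>l<n. if l \<in> S then h l 0 else (\<Sum>u<d. h l u))"
  proof (intro prod.cong refl)
    fix l
    have "(\<Sum>u<d. ?h l u) = (\<Sum>u<d. if u = 0 then h l u else 0)" if "l \<in> S"
      using that by (intro sum.cong) auto
    then show "(\<Sum>u<d. ?h l u) = (if l \<in> S then h l 0 else (\<Sum>u<d. h l u))"
      using d by (simp add: sum.delta)
  qed
  finally show ?thesis .
qed

lemma prod_if_divide_power:
  fixes A B :: "nat \<Rightarrow> complex"
  assumes S: "S \<subseteq> {..<n}"
  shows "(\<Prod>l<n. if l \<in> S then A l else B l) / c ^ (n - card S)
       = (\<Prod>l<n. if l \<in> S then A l else B l / c)"
proof -
  have "card ({..<n} \<inter> - S) = n - card S"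
    using S finite_subset[OF S] by (simp add: Diff_eq[symmetric] card_Diff_subset)
  then show ?thesis
    by (simp add: prod.If_cases prod_dividef)
qed

definition ptr_factors :: "nat \<Rightarrow> nat set \<Rightarrow> (nat \<Rightarrow> lop) \<Rightarrow> nat \<Rightarrow> lop" where
  "ptr_factors d S f l = (if l \<in> S then f l else lscalar (ltr d (f l) / of_nat d))"

lemma ptr_factors_UNIV [simp]: "ptr_factors d UNIV f = f"
  by (simp add: ptr_factors_def fun_eq_iff)

lemma ptr_factors_in [simp]: "l \<in> S \<Longrightarrow> ptr_factors d S f l = f l"
  by (simp add: ptr_factors_def)

lemma ptr_factors_out [simp]: "l \<notin> S \<Longrightarrow> ptr_factors d S f l = lscalar (ltr d (f l) / of_nat d)"
  by (simp add: ptr_factors_def)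

lemma ltr_ptr_factors: "0 < d \<Longrightarrow> ltr d (ptr_factors d S f l) = ltr d (f l)"
  by (simp add: ptr_factors_def)

lemma ptr_embed_tensor_prod:
  assumes d: "0 < d" and S: "S \<subseteq> {..<n}"
  shows "geq n d (ptr_embed n d S (tensor_prod n f)) (tensor_prod n (ptr_factors d S f))"
proof (rule geqI)
  fix x y assume x: "x \<in> cfgs n d" and y: "y \<in> cfgs n d"
  show "ptr_embed n d S (tensor_prod n f) x y = tensor_prod n (ptr_factors d S f) x y"
  proof (cases "agree_off n S x y")
    case True
    have "(\<Sum>c\<in>compl_cfgs n d S. tensor_prod n f (merge n S x c) (merge n S y c))
        = (\<Sum>c\<in>compl_cfgs n d S. \<Prod>l<n. (\<lambda>l u. if l \<in> S then f l (x ! l) (y ! l) else f l u u) l (c ! l))"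
      by (intro sum.cong refl) (auto simp: tensor_prod_def merge_nth intro!: prod.cong)
    also have "\<dots> = (\<Prod>l<n. if l \<in> S then f l (x ! l) (y ! l) else ltr d (f l))"
      by (subst sum_compl_cfgs_prod[OF d]) (auto simp: ltr_def intro!: prod.cong)
    finally have "ptr_embed n d S (tensor_prod n f) x y
        = (\<Prod>l<n. if l \<in> S then f l (x ! l) (y ! l) else ltr d (f l)) / of_nat d ^ (n - card S)"
      using True by (simp add: ptr_embed_def)
    also have "\<dots> = (\<Prod>l<n. if l \<in> S then f l (x ! l) (y ! l) else ltr d (f l) / of_nat d)"
      by (rule prod_if_divide_power[OF S])
    also have "\<dots> = tensor_prod n (ptr_factors d S f) x y"
      unfolding tensor_prod_def
    proof (rule prod.cong)
      fix l assume "l \<in> {..<n}"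
      then show "(if l \<in> S then f l (x ! l) (y ! l) else ltr d (f l) / of_nat d)
          = ptr_factors d S f l (x ! l) (y ! l)"
        using True by (simp add: ptr_factors_def lscalar_def agree_off_def)
    qed simp
    finally show ?thesis .
  next
    case False
    then obtain k where k: "k < n" "k \<notin> S" "x ! k \<noteq> y ! k"
      by (auto simp: agree_off_def)
    then have "tensor_prod n (ptr_factors d S f) x y = 0"
      unfolding tensor_prod_def
      by (intro prod_zero) (auto simp: ptr_factors_def lscalar_def intro!: bexI[of _ k])
    then show ?thesis
      using False by (simp add: ptr_embed_def)
  qed
qed

lemma tensor_prod_ptr_factors_local:
  assumes loc: "\<And>l a b. l < n \<Longrightarrow> l \<notin> U \<Longrightarrow> a < d \<Longrightarrow> b < d \<Longrightarrow> f l a b = lid a b"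
    and d: "0 < d" and SU: "S \<inter> U = S' \<inter> U"
  shows "geq n d (tensor_prod n (ptr_factors d S f)) (tensor_prod n (ptr_factors d S' f))"
proof (rule tensor_prod_cong)
  fix l a b assume l: "l < n" and a: "a < d" and b: "b < d"
  show "ptr_factors d S f l a b = ptr_factors d S' f l a b"
  proof (cases "l \<in> U")
    case True
    then have "l \<in> S \<longleftrightarrow> l \<in> S'"
      using SU by blast
    then show ?thesis
      by (simp add: ptr_factors_def)
  next
    case False
    have "ltr d (f l) = ltr d lid"
      using loc l False by (intro ltr_cong) auto
    then have "ltr d (f l) / of_nat d = 1"
      using d by simp
    then show ?thesis
      using False loc[OF l False a b] by (simp add: ptr_factors_def)
  qed
qed

lemma ptr_embed_ptr_embed:
  assumes d: "0 < d" and S: "S \<subseteq> {..<n}" and T: "T \<subseteq> {..<n}"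
  shows "geq n d (ptr_embed n d S (ptr_embed n d T A)) (ptr_embed n d (S \<inter> T) A)"
proof (rule glinear_eq_tensor_prod[OF glinear_comp[OF glinear_ptr_embed glinear_ptr_embed] glinear_ptr_embed])
  fix f
  have "geq n d (ptr_embed n d S (ptr_embed n d T (tensor_prod n f)))
                (ptr_embed n d S (tensor_prod n (ptr_factors d T f)))"
    by (rule ptr_embed_cong, rule ptr_embed_tensor_prod[OF d T])
  also have "geq n d \<dots> (tensor_prod n (ptr_factors d S (ptr_factors d T f)))"
    by (rule ptr_embed_tensor_prod[OF d S])
  also have "ptr_factors d S (ptr_factors d T f) = ptr_factors d (S \<inter> T) f"
  proof
    fix l
    show "ptr_factors d S (ptr_factors d T f) l = ptr_factors d (S \<inter> T) f l"
      by (cases "l \<in> S"; cases "l \<in> T") (simp_all add: ltr_ptr_factors[OF d])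
  qed
  also have "geq n d (tensor_prod n \<dots>) (ptr_embed n d (S \<inter> T) (tensor_prod n f))"
    by (rule geq_sym, rule ptr_embed_tensor_prod[OF d]) (use S in auto)
  finally show "geq n d (ptr_embed n d S (ptr_embed n d T (tensor_prod n f)))
                        (ptr_embed n d (S \<inter> T) (tensor_prod n f))" .
qed

section \<open>Two-body cluster expansion of the Hamiltonian\<close>

definition site_pairs :: "nat \<Rightarrow> (nat \<times> nat) set" where
  "site_pairs n = {(p, q). p < q \<and> q < n}"

lemma finite_site_pairs [simp]: "finite (site_pairs n)"
  by (rule finite_subset[of _ "{..<n} \<times> {..<n}"]) (auto simp: site_pairs_def)

text \<open>With \<open>V S\<close> the normalised partial trace of \<open>H\<close> onto \<open>S\<close>, the summands are
  exactly \<open>H\<^sub>i\<^sub>j\<close>, \<open>H\<^sub>i\<close> and \<open>Tr H / d\<^sup>n\<close>. By inclusion-exclusion the sum collapses to \<open>V U\<close>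
  whenever \<open>V S\<close> only depends on \<open>S \<inter> U\<close> for a set \<open>U\<close> of at most two sites.\<close>

definition cluster_sum :: "nat \<Rightarrow> (nat set \<Rightarrow> complex) \<Rightarrow> complex" where
  "cluster_sum n V = (\<Sum>(p, q)\<in>site_pairs n. V {p, q} - V {p} - V {q} + V {})
                    + (\<Sum>p<n. V {p} - V {}) + V {}"

lemma cluster_sum_cong:
  assumes "\<And>S. S \<subseteq> {..<n} \<Longrightarrow> V S = V' S"
  shows "cluster_sum n V = cluster_sum n V'"
proof -
  have "\<And>p q. (p, q) \<in> site_pairs n \<Longrightarrow> {p, q} \<subseteq> {..<n}"
    by (auto simp: site_pairs_def)
  then show ?thesis
    unfolding cluster_sum_def using assms
    by (intro arg_cong2[where f = "(+)"] sum.cong) auto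
qed

lemma cluster_sum_add: "cluster_sum n (\<lambda>S. V S + W S) = cluster_sum n V + cluster_sum n W"
  by (simp add: cluster_sum_def case_prod_beta sum.distrib[symmetric] algebra_simps)

lemma cluster_sum_scale: "cluster_sum n (\<lambda>S. c * V S) = c * cluster_sum n V"
  by (simp add: cluster_sum_def case_prod_beta sum_distrib_left algebra_simps)

lemma cluster_sum_sum:
  "finite K \<Longrightarrow> cluster_sum n (\<lambda>S. \<Sum>k\<in>K. V k S) = (\<Sum>k\<in>K. cluster_sum n (V k))"
  by (induction rule: finite_induct) (simp_all add: cluster_sum_add, simp add: cluster_sum_def)

lemma cluster_sum_const: "cluster_sum n (\<lambda>S. k) = k"
  by (simp add: cluster_sum_def)

lemma cluster_sum_local:
  assumes i: "i < n" and j: "j < n"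
  shows "cluster_sum n (\<lambda>S. W (S \<inter> {i, j})) = W {i, j}"
proof -
  define a where "a = min i j"
  define b where "b = max i j"
  have ab: "{i, j} = {a, b}" "a \<le> b" "b < n"
    using i j by (auto simp: a_def b_def)
  let ?V = "\<lambda>S. W (S \<inter> {a, b})"
  have pairs: "(\<Sum>(p, q)\<in>site_pairs n. ?V {p, q} - ?V {p} - ?V {q} + ?V {})
      = (if a < b then W {a, b} - W {a} - W {b} + W {} else 0)"
  proof -
    have "(\<Sum>(p, q)\<in>site_pairs n. ?V {p, q} - ?V {p} - ?V {q} + ?V {})
        = (\<Sum>pq\<in>site_pairs n. if pq = (a, b) then W {a, b} - W {a} - W {b} + W {} else 0)"
    proof (rule sum.cong[OF refl])
      fix pq assume "pq \<in> site_pairs n"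
      then obtain p q where pq: "pq = (p, q)" "p < q"
        by (auto simp: site_pairs_def)
      then show "(case pq of (p, q) \<Rightarrow> ?V {p, q} - ?V {p} - ?V {q} + ?V {})
          = (if pq = (a, b) then W {a, b} - W {a} - W {b} + W {} else 0)"
        using ab(2) by (cases "p \<in> {a, b}"; cases "q \<in> {a, b}") (auto simp: Int_insert_left)
    qed
    also have "\<dots> = (if (a, b) \<in> site_pairs n then W {a, b} - W {a} - W {b} + W {} else 0)"
      by (rule sum.delta[OF finite_site_pairs])
    finally show ?thesis
      using ab by (simp add: site_pairs_def)
  qed
  have singles: "(\<Sum>p<n. ?V {p} - ?V {}) = (\<Sum>p\<in>{a, b}. W {p} - W {})"
    using ab by (intro sum.mono_neutral_cong_right) auto
  show ?thesis
    unfolding cluster_sum_def ab(1) pairs singles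
    using ab(2) by (cases "a = b") (auto simp: insert_commute)
qed

lemma glinear_cluster_sum_ptr_embed:
  "glinear n d (\<lambda>A x y. cluster_sum n (\<lambda>S. ptr_embed n d S A x y))"
  unfolding glinear_def
proof (intro conjI allI impI)
  fix A B assume AB: "geq n d A B"
  show "geq n d (\<lambda>x y. cluster_sum n (\<lambda>S. ptr_embed n d S A x y))
                (\<lambda>x y. cluster_sum n (\<lambda>S. ptr_embed n d S B x y))"
    using geqD[OF ptr_embed_cong[OF AB]] by (simp add: geq_def)
qed (simp add: ptr_embed_add ptr_embed_scale cluster_sum_add cluster_sum_scale)

lemma cluster_sum_ptr_embed_tensor_prod:
  assumes d: "0 < d" and i: "i < n" and j: "j < n"
    and loc: "\<And>l a b. l < n \<Longrightarrow> l \<notin> {i, j} \<Longrightarrow> a < d \<Longrightarrow> b < d \<Longrightarrow> f l a b = lid a b"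
  shows "geq n d (\<lambda>x y. cluster_sum n (\<lambda>S. ptr_embed n d S (tensor_prod n f) x y)) (tensor_prod n f)"
proof (rule geqI)
  fix x y assume x: "x \<in> cfgs n d" and y: "y \<in> cfgs n d"
  define W where "W U = tensor_prod n (ptr_factors d U f) x y" for U
  have "cluster_sum n (\<lambda>S. ptr_embed n d S (tensor_prod n f) x y) = cluster_sum n (\<lambda>S. W (S \<inter> {i, j}))"
  proof (rule cluster_sum_cong)
    fix S assume S: "S \<subseteq> {..<n}"
    show "ptr_embed n d S (tensor_prod n f) x y = W (S \<inter> {i, j})"
      unfolding W_def geqD[OF ptr_embed_tensor_prod[OF d S] x y]
      by (rule geqD[OF tensor_prod_ptr_factors_local[where U = "{i, j}", OF loc d] x y]) auto
  qed
  also have "\<dots> = W {i, j}"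
    by (rule cluster_sum_local[OF i j])
  also have "\<dots> = W UNIV"
    unfolding W_def by (rule geqD[OF tensor_prod_ptr_factors_local[where U = "{i, j}", OF loc d] x y]) auto
  finally show "cluster_sum n (\<lambda>S. ptr_embed n d S (tensor_prod n f) x y) = tensor_prod n f x y"
    by (simp add: W_def)
qed

lemma cluster_sum_ptr_embed_lid:
  assumes d: "0 < d"
  shows "geq n d (\<lambda>x y. cluster_sum n (\<lambda>S. ptr_embed n d S (tensor_prod n (\<lambda>_. lid)) x y))
                 (tensor_prod n (\<lambda>_. lid))"
proof (rule geqI)
  fix x y assume x: "x \<in> cfgs n d" and y: "y \<in> cfgs n d"
  have "ptr_embed n d S (tensor_prod n (\<lambda>_. lid)) x y = tensor_prod n (\<lambda>_. lid) x y"
    if S: "S \<subseteq> {..<n}" for S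
    unfolding geqD[OF ptr_embed_tensor_prod[OF d S] x y]
    using geqD[OF tensor_prod_ptr_factors_local[of n "{}" d "\<lambda>_. lid" S UNIV] x y] d by simp
  then show "cluster_sum n (\<lambda>S. ptr_embed n d S (tensor_prod n (\<lambda>_. lid)) x y)
      = tensor_prod n (\<lambda>_. lid) x y"
    by (simp add: cluster_sum_cong[of n _ "\<lambda>_. tensor_prod n (\<lambda>_. lid) x y"] cluster_sum_const)
qed

lemma tensor_prod_lunit_on:
  assumes x: "x \<in> cfgs n d" and y: "y \<in> cfgs n d"
  shows "tensor_prod n (\<lambda>l. if l \<in> S then lunit (u ! l) (v ! l) else lid) x y
       = (if (\<forall>l<n. l \<in> S \<longrightarrow> x ! l = u ! l \<and> y ! l = v ! l) \<and> agree_off n S x y then 1 else 0)"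
proof -
  have "tensor_prod n (\<lambda>l. if l \<in> S then lunit (u ! l) (v ! l) else lid) x y
      = (\<Prod>l\<in>{..<n}. if (if l \<in> S then x ! l = u ! l \<and> y ! l = v ! l else x ! l = y ! l) then 1 else 0)"
    unfolding tensor_prod_def lunit_def lscalar_def by (intro prod.cong) auto
  also have "\<dots> = (if \<forall>l\<in>{..<n}. if l \<in> S then x ! l = u ! l \<and> y ! l = v ! l else x ! l = y ! l
                   then 1 else 0)"
    by (rule prod_if_one_zero) simp
  finally show ?thesis
    by (auto simp: agree_off_def)
qed

definition restrict_cfg :: "nat \<Rightarrow> nat set \<Rightarrow> nat list \<Rightarrow> nat list" where
  "restrict_cfg n S x = map (\<lambda>k. if k \<in> S then x ! k else 0) [0..<n]"

lemma restrict_cfg_in_cfgs: "0 < d \<Longrightarrow> x \<in> cfgs n d \<Longrightarrow> restrict_cfg n S x \<in> cfgs n d"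
  by (auto simp: restrict_cfg_def mem_cfgs_iff)

lemma acts_on_apply:
  assumes d: "0 < d" and A: "acts_on n d S T" and x: "x \<in> cfgs n d" and y: "y \<in> cfgs n d"
  shows "T x y = (if agree_off n S x y then T (restrict_cfg n S x) (restrict_cfg n S y) else 0)"
proof -
  obtain a where a: "\<And>x y. x \<in> cfgs n d \<Longrightarrow> y \<in> cfgs n d \<Longrightarrow>
      T x y = (if agree_off n S x y then a (restrict_cfg n S x) (restrict_cfg n S y) else 0)"
    using A unfolding acts_on_def restrict_cfg_def by blast
  have "agree_off n S (restrict_cfg n S x) (restrict_cfg n S y)"
    by (auto simp: agree_off_def restrict_cfg_def)
  moreover have "restrict_cfg n S (restrict_cfg n S z) = restrict_cfg n S z" for z
    by (auto simp: restrict_cfg_def list_eq_iff_nth_eq)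
  ultimately show ?thesis
    using a[OF x y] a[OF restrict_cfg_in_cfgs[OF d x] restrict_cfg_in_cfgs[OF d y]] by simp
qed

lemma acts_on_eq_sum_tensor_prod:
  assumes d: "0 < d" and A: "acts_on n d S T"
    and Z: "Z = {u \<in> cfgs n d. \<forall>k<n. k \<notin> S \<longrightarrow> u ! k = 0}"
  shows "geq n d T (\<lambda>x y. \<Sum>p\<in>Z \<times> Z.
      T (fst p) (snd p) * tensor_prod n (\<lambda>l. if l \<in> S then lunit (fst p ! l) (snd p ! l) else lid) x y)"
proof (rule geqI)
  fix x y assume x: "x \<in> cfgs n d" and y: "y \<in> cfgs n d"
  let ?x = "restrict_cfg n S x" and ?y = "restrict_cfg n S y"
  have restrict_iff: "(\<forall>l<n. l \<in> S \<longrightarrow> z ! l = u ! l) \<longleftrightarrow> u = restrict_cfg n S z"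
    if "u \<in> Z" "z \<in> cfgs n d" for u z
    using that by (auto simp: Z mem_cfgs_iff restrict_cfg_def list_eq_iff_nth_eq)
  have "(\<Sum>p\<in>Z \<times> Z. T (fst p) (snd p)
          * tensor_prod n (\<lambda>l. if l \<in> S then lunit (fst p ! l) (snd p ! l) else lid) x y)
      = (\<Sum>p\<in>Z \<times> Z. if p = (?x, ?y) then (if agree_off n S x y then T ?x ?y else 0) else 0)"
  proof (rule sum.cong[OF refl])
    fix p assume "p \<in> Z \<times> Z"
    then show "T (fst p) (snd p) * tensor_prod n (\<lambda>l. if l \<in> S then lunit (fst p ! l) (snd p ! l) else lid) x y
        = (if p = (?x, ?y) then (if agree_off n S x y then T ?x ?y else 0) else 0)"
      using restrict_iff[of "fst p" x] restrict_iff[of "snd p" y] x y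
      by (cases p) (auto simp: tensor_prod_lunit_on)
  qed
  also have "\<dots> = T x y"
    using restrict_cfg_in_cfgs[OF d x] restrict_cfg_in_cfgs[OF d y] acts_on_apply[OF d A x y]
    by (simp add: Z restrict_cfg_def)
  finally show "T x y = (\<Sum>p\<in>Z \<times> Z. T (fst p) (snd p)
      * tensor_prod n (\<lambda>l. if l \<in> S then lunit (fst p ! l) (snd p ! l) else lid) x y)"
    by simp
qed

lemma cluster_sum_ptr_embed_acts_on:
  assumes d: "0 < d" and ij: "i < n" "j < n" and T: "acts_on n d {i, j} T"
  shows "geq n d (\<lambda>x y. cluster_sum n (\<lambda>S. ptr_embed n d S T x y)) T"
proof -
  let ?R = "\<lambda>A x y. cluster_sum n (\<lambda>S. ptr_embed n d S A x y)"
  have R: "glinear n d ?R"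
    by (rule glinear_cluster_sum_ptr_embed)
  define Z where "Z = {u \<in> cfgs n d. \<forall>k<n. k \<notin> {i, j} \<longrightarrow> u ! k = 0}"
  define F where "F p = (\<lambda>l. if l \<in> {i, j} then lunit (fst p ! l) (snd p ! l) else lid)"
    for p :: "nat list \<times> nat list"
  have E: "geq n d T (\<lambda>x y. \<Sum>p\<in>Z \<times> Z. T (fst p) (snd p) * tensor_prod n (F p) x y)"
    unfolding F_def by (rule acts_on_eq_sum_tensor_prod[OF d T Z_def])
  have "geq n d (?R T) (?R (\<lambda>x y. \<Sum>p\<in>Z \<times> Z. T (fst p) (snd p) * tensor_prod n (F p) x y))"
    by (rule glinear_cong[OF R E])
  also have "geq n d \<dots> (\<lambda>x y. \<Sum>p\<in>Z \<times> Z. ?R (\<lambda>x y. T (fst p) (snd p) * tensor_prod n (F p) x y) x y)"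
    by (rule glinear_sum[OF R]) (simp add: Z_def)
  also have "geq n d \<dots> (\<lambda>x y. \<Sum>p\<in>Z \<times> Z. T (fst p) (snd p) * tensor_prod n (F p) x y)"
  proof (rule geq_sum)
    fix p
    have "geq n d (?R (tensor_prod n (F p))) (tensor_prod n (F p))"
      by (rule cluster_sum_ptr_embed_tensor_prod[OF d ij]) (auto simp: F_def)
    then show "geq n d (?R (\<lambda>x y. T (fst p) (snd p) * tensor_prod n (F p) x y))
                       (\<lambda>x y. T (fst p) (snd p) * tensor_prod n (F p) x y)"
      using glinear_scale[OF R, of "T (fst p) (snd p)" "tensor_prod n (F p)"] by (simp add: geq_def)
  qed
  also have "geq n d \<dots> T"
    by (rule geq_sym[OF E])
  finally show ?thesis .
qed

lemma two_local_cluster_expansion: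
  assumes d: "0 < d" and L: "two_local n d H"
  shows "geq n d (\<lambda>x y. cluster_sum n (\<lambda>S. ptr_embed n d S H x y)) H"
proof -
  let ?R = "\<lambda>A x y. cluster_sum n (\<lambda>S. ptr_embed n d S A x y)"
  obtain c T where T: "\<forall>i<n. \<forall>j<n. acts_on n d {i, j} (T i j)"
    and H: "\<forall>x\<in>cfgs n d. \<forall>y\<in>cfgs n d. H x y = (if x = y then c else 0) + (\<Sum>i<n. \<Sum>j<n. T i j x y)"
    using L unfolding two_local_def by blast
  let ?E = "\<lambda>x y. c * tensor_prod n (\<lambda>_. lid) x y + (\<Sum>i<n. \<Sum>j<n. T i j x y)"
  have HE: "geq n d H ?E"
    using H by (simp add: geq_def tensor_prod_lid)
  have "geq n d (?R H) (?R ?E)"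
    by (rule glinear_cong[OF glinear_cluster_sum_ptr_embed HE])
  also have "\<dots> = (\<lambda>x y. c * ?R (tensor_prod n (\<lambda>_. lid)) x y + (\<Sum>i<n. \<Sum>j<n. ?R (T i j) x y))"
    by (simp add: ptr_embed_add ptr_embed_scale ptr_embed_sum cluster_sum_add cluster_sum_scale
        cluster_sum_sum)
  also have "geq n d \<dots> ?E"
    using cluster_sum_ptr_embed_lid[OF d] cluster_sum_ptr_embed_acts_on[OF d] T by (simp add: geq_def)
  also have "geq n d \<dots> H"
    by (rule geq_sym[OF HE])
  finally show ?thesis .
qed

lemma merge_empty: "length c = n \<Longrightarrow> merge n {} x c = c"
  by (auto simp: merge_def list_eq_iff_nth_eq)

lemma merge_single: "length c = n \<Longrightarrow> i < n \<Longrightarrow> merge n {i} x c = c[i := x ! i]"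
  by (auto simp: merge_def list_eq_iff_nth_eq nth_list_update)

lemma ptr_embed_empty:
  assumes x: "x \<in> cfgs n d" and y: "y \<in> cfgs n d"
  shows "ptr_embed n d {} H x y = (if x = y then gtrace n d H / of_nat d ^ n else 0)"
proof -
  have "(\<Sum>c\<in>compl_cfgs n d {}. H (merge n {} u c) (merge n {} v c)) = gtrace n d H" for u v
    unfolding compl_cfgs_def gtrace_def
    by (intro sum.cong) (auto simp: merge_empty cfgs_length)
  moreover have "agree_off n {} x y \<longleftrightarrow> x = y"
    using x y by (auto simp: agree_off_def mem_cfgs_iff list_eq_iff_nth_eq)
  ultimately show ?thesis
    by (simp add: ptr_embed_def)
qed

lemma embed1_Hsite:
  assumes i: "i < n" and x: "x \<in> cfgs n d" and y: "y \<in> cfgs n d"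
  shows "embed1 n i (Hsite n d H i) x y = ptr_embed n d {i} H x y - ptr_embed n d {} H x y"
proof -
  have "(\<Sum>c\<in>compl_cfgs n d {i}. H (merge n {i} x c) (merge n {i} y c))
      = (\<Sum>c\<in>compl_cfgs n d {i}. H (c[i := x ! i]) (c[i := y ! i]))"
  proof (rule sum.cong[OF refl])
    fix c assume "c \<in> compl_cfgs n d {i}"
    then have "length c = n"
      by (auto simp: compl_cfgs_def cfgs_length)
    then show "H (merge n {i} x c) (merge n {i} y c) = H (c[i := x ! i]) (c[i := y ! i])"
      using i by (simp add: merge_single)
  qed
  moreover have "agree_off n {i} x y \<and> x ! i = y ! i \<longleftrightarrow> x = y"
    using x y i by (auto simp: agree_off_def mem_cfgs_iff list_eq_iff_nth_eq)
  ultimately show ?thesis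
    unfolding embed1_def Hsite_def ptr_embed_empty[OF x y] by (auto simp: ptr_embed_def)
qed

lemma Hamiltonian_decomposition:
  assumes d: "0 < d" and L: "two_local n d H"
  shows "geq n d H (\<lambda>x y. (\<Sum>(p, q)\<in>site_pairs n. Hpair n d H p q x y)
                        + (\<Sum>p<n. embed1 n p (Hsite n d H p) x y) + ptr_embed n d {} H x y)"
proof (rule geqI)
  fix x y assume x: "x \<in> cfgs n d" and y: "y \<in> cfgs n d"
  show "H x y = (\<Sum>(p, q)\<in>site_pairs n. Hpair n d H p q x y)
              + (\<Sum>p<n. embed1 n p (Hsite n d H p) x y) + ptr_embed n d {} H x y"
    unfolding geqD[OF two_local_cluster_expansion[OF d L] x y, symmetric]
    by (simp add: cluster_sum_def Hpair_def embed1_Hsite[OF _ x y])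
qed

section \<open>The generator on a product state\<close>

lemma tensor_pow_eq_tensor_split: "tensor_pow n \<rho> = tensor_split n S \<rho> \<rho>"
  by (simp add: tensor_pow_def tensor_split_def tensor_prod_def)

lemma gmult_tensor_split:
  "gmult n d (tensor_split n S X Y) (tensor_split n S X' Y')
   = tensor_split n S (lmult d X X') (lmult d Y Y')"
  unfolding tensor_split_def gmult_tensor_prod
  by (intro arg_cong[where f = "tensor_prod n"] ext) simp

lemma tensor_split_cong:
  assumes "\<And>a b. a < d \<Longrightarrow> b < d \<Longrightarrow> X a b = X' a b"
    and "\<And>a b. a < d \<Longrightarrow> b < d \<Longrightarrow> Y a b = Y' a b"
  shows "geq n d (tensor_split n S X Y) (tensor_split n S X' Y')"
  unfolding tensor_split_def using assms by (intro tensor_prod_cong) auto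

lemma embed1_eq_tensor_split:
  assumes i: "i < n"
  shows "geq n d (embed1 n i X) (tensor_split n {i} X lid)"
proof (rule geqI)
  fix x y
  have "(\<Prod>l\<in>{..<n}-{i}. lid (x ! l) (y ! l)) = (if \<forall>l\<in>{..<n}-{i}. x ! l = y ! l then 1 else 0)"
    unfolding lscalar_def by (rule prod_if_one_zero) simp
  then show "embed1 n i X x y = tensor_split n {i} X lid x y"
    unfolding tensor_split_site[OF i] by (auto simp: embed1_def agree_off_def)
qed

lemma gadj_embed1: "gadj (embed1 n p L) = embed1 n p (ladj L)"
  by (intro ext) (auto simp: gadj_def embed1_def ladj_def agree_off_def)

lemma gmult_embed1_tensor_split:
  assumes p: "p < n"
  shows "geq n d (gmult n d (embed1 n p X) (tensor_split n {p} Y \<rho>)) (tensor_split n {p} (lmult d X Y) \<rho>)"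
proof -
  have "geq n d (gmult n d (embed1 n p X) (tensor_split n {p} Y \<rho>))
                (gmult n d (tensor_split n {p} X lid) (tensor_split n {p} Y \<rho>))"
    by (rule gmult_cong_left[OF embed1_eq_tensor_split[OF p]])
  also have "geq n d \<dots> (tensor_split n {p} (lmult d X Y) \<rho>)"
    unfolding gmult_tensor_split by (rule tensor_split_cong) simp_all
  finally show ?thesis .
qed

lemma gmult_tensor_split_embed1:
  assumes p: "p < n"
  shows "geq n d (gmult n d (tensor_split n {p} Y \<rho>) (embed1 n p X)) (tensor_split n {p} (lmult d Y X) \<rho>)"
proof -
  have "geq n d (gmult n d (tensor_split n {p} Y \<rho>) (embed1 n p X))
                (gmult n d (tensor_split n {p} Y \<rho>) (tensor_split n {p} X lid))"
    by (rule gmult_cong_right[OF embed1_eq_tensor_split[OF p]])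
  also have "geq n d \<dots> (tensor_split n {p} (lmult d Y X) \<rho>)"
    unfolding gmult_tensor_split by (rule tensor_split_cong) simp_all
  finally show ?thesis .
qed

lemma gmult_embed1_embed1:
  assumes p: "p < n"
  shows "geq n d (gmult n d (embed1 n p X) (embed1 n p Y)) (embed1 n p (lmult d X Y))"
proof -
  have "geq n d (gmult n d (embed1 n p X) (embed1 n p Y)) (tensor_split n {p} (lmult d X Y) lid)"
    by (rule geq_trans[OF gmult_cong_right[OF embed1_eq_tensor_split[OF p]] gmult_embed1_tensor_split[OF p]])
  also have "geq n d \<dots> (embed1 n p (lmult d X Y))"
    by (rule geq_sym[OF embed1_eq_tensor_split[OF p]])
  finally show ?thesis .
qed

lemma gcomm_embed1_tensor_pow:
  assumes p: "p < n"
  shows "geq n d (gcomm n d (embed1 n p X) (tensor_pow n \<rho>)) (tensor_split n {p} (lcomm d X \<rho>) \<rho>)"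
proof -
  have "geq n d (gcomm n d (embed1 n p X) (tensor_pow n \<rho>))
      (\<lambda>x y. tensor_split n {p} (lmult d X \<rho>) \<rho> x y - tensor_split n {p} (lmult d \<rho> X) \<rho> x y)"
    unfolding gcomm_def tensor_pow_eq_tensor_split[of n \<rho> "{p}"]
    by (intro geq_diff gmult_embed1_tensor_split[OF p] gmult_tensor_split_embed1[OF p])
  then show ?thesis
    by (simp add: geq_def tensor_split_site[OF p] lcomm_def algebra_simps)
qed

lemma gdiss_embed1_tensor_pow:
  assumes p: "p < n"
  shows "geq n d (gdiss n d (embed1 n p L) (tensor_pow n \<rho>)) (tensor_split n {p} (ldiss d L \<rho>) \<rho>)"
proof -
  let ?E = "embed1 n p L" and ?T = "tensor_split n {p}"
  have EaE: "geq n d (gmult n d (gadj ?E) ?E) (embed1 n p (lmult d (ladj L) L))"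
    unfolding gadj_embed1 by (rule gmult_embed1_embed1[OF p])
  have t1: "geq n d (gmult n d (gmult n d ?E (tensor_pow n \<rho>)) (gadj ?E)) (?T (lmult d (lmult d L \<rho>) (ladj L)) \<rho>)"
    unfolding gadj_embed1 tensor_pow_eq_tensor_split[of n \<rho> "{p}"]
    by (rule geq_trans[OF gmult_cong_left[OF gmult_embed1_tensor_split[OF p]] gmult_tensor_split_embed1[OF p]])
  have t2: "geq n d (gmult n d (gmult n d (gadj ?E) ?E) (tensor_pow n \<rho>)) (?T (lmult d (lmult d (ladj L) L) \<rho>) \<rho>)"
    unfolding tensor_pow_eq_tensor_split[of n \<rho> "{p}"]
    by (rule geq_trans[OF gmult_cong_left[OF EaE] gmult_embed1_tensor_split[OF p]])
  have t3: "geq n d (gmult n d (tensor_pow n \<rho>) (gmult n d (gadj ?E) ?E)) (?T (lmult d \<rho> (lmult d (ladj L) L)) \<rho>)"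
    unfolding tensor_pow_eq_tensor_split[of n \<rho> "{p}"]
    by (rule geq_trans[OF gmult_cong_right[OF EaE] gmult_tensor_split_embed1[OF p]])
  show ?thesis
  proof (rule geqI)
    fix x y assume x: "x \<in> cfgs n d" and y: "y \<in> cfgs n d"
    show "gdiss n d ?E (tensor_pow n \<rho>) x y = ?T (ldiss d L \<rho>) \<rho> x y"
      unfolding gdiss_def geqD[OF t1 x y] geqD[OF t2 x y] geqD[OF t3 x y]
      by (simp add: tensor_split_site[OF p] ldiss_def algebra_simps)
  qed
qed

lemma gcomm_scalar_left:
  assumes "\<And>x y. x \<in> cfgs n d \<Longrightarrow> y \<in> cfgs n d \<Longrightarrow> P x y = (if x = y then c else 0)"
  shows "geq n d (gcomm n d P B) (\<lambda>x y. 0)"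
proof (rule geqI)
  fix x y assume x: "x \<in> cfgs n d" and y: "y \<in> cfgs n d"
  have "gmult n d P B x y = (\<Sum>z\<in>cfgs n d. if z = x then c * B z y else 0)"
    unfolding gmult_def using assms x by (intro sum.cong) auto
  moreover have "gmult n d B P x y = (\<Sum>z\<in>cfgs n d. if z = y then c * B x z else 0)"
    unfolding gmult_def using assms y by (intro sum.cong) auto
  ultimately show "gcomm n d P B x y = 0"
    using x y by (simp add: gcomm_def)
qed

lemma GKSL_tensor_pow:
  assumes d: "0 < d" and L: "two_local n d H"
  shows "geq n d (GKSL n d H Gam Lop (tensor_pow n \<rho>))
           (\<lambda>x y. - \<i> * (\<Sum>(p, q)\<in>site_pairs n. gcomm n d (Hpair n d H p q) (tensor_pow n \<rho>) x y)
                  + (\<Sum>p<n. tensor_split n {p} (Lsite n d H Gam Lop p \<rho>) \<rho> x y))"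
proof -
  let ?P = "tensor_pow n \<rho>"
  let ?pairs = "\<lambda>x y. \<Sum>(p, q)\<in>site_pairs n. gcomm n d (Hpair n d H p q) ?P x y"
  have comm: "geq n d (gcomm n d H ?P)
      (\<lambda>x y. ?pairs x y + (\<Sum>p<n. tensor_split n {p} (lcomm d (Hsite n d H p) \<rho>) \<rho> x y) + 0)"
  proof -
    have "geq n d (gcomm n d H ?P) (\<lambda>x y. ?pairs x y
        + (\<Sum>p<n. gcomm n d (embed1 n p (Hsite n d H p)) ?P x y) + gcomm n d (ptr_embed n d {} H) ?P x y)"
      using gcomm_cong_left[OF Hamiltonian_decomposition[OF d L]]
      by (simp add: gcomm_add_left gcomm_sum_left case_prod_beta)
    also have "geq n d \<dots>
        (\<lambda>x y. ?pairs x y + (\<Sum>p<n. tensor_split n {p} (lcomm d (Hsite n d H p) \<rho>) \<rho> x y) + 0)"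
      by (intro geq_add geq_refl geq_sum gcomm_embed1_tensor_pow gcomm_scalar_left)
        (simp_all add: ptr_embed_empty)
    finally show ?thesis .
  qed
  have diss: "geq n d (\<lambda>x y. \<Sum>i<n. \<Sum>\<alpha>\<in>Gam i. gdiss n d (embed1 n i (Lop i \<alpha>)) ?P x y)
      (\<lambda>x y. \<Sum>i<n. \<Sum>\<alpha>\<in>Gam i. tensor_split n {i} (ldiss d (Lop i \<alpha>) \<rho>) \<rho> x y)"
    by (intro geq_sum gdiss_embed1_tensor_pow) simp
  have site: "tensor_split n {p} (Lsite n d H Gam Lop p \<rho>) \<rho> x y
      = - \<i> * tensor_split n {p} (lcomm d (Hsite n d H p) \<rho>) \<rho> x y
        + (\<Sum>\<alpha>\<in>Gam p. tensor_split n {p} (ldiss d (Lop p \<alpha>) \<rho>) \<rho> x y)" if "p < n" for p x y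
    using that by (simp add: tensor_split_site Lsite_def algebra_simps sum_distrib_left)
  show ?thesis
  proof (rule geqI)
    fix x y assume x: "x \<in> cfgs n d" and y: "y \<in> cfgs n d"
    show "GKSL n d H Gam Lop ?P x y
        = - \<i> * ?pairs x y + (\<Sum>p<n. tensor_split n {p} (Lsite n d H Gam Lop p \<rho>) \<rho> x y)"
      unfolding GKSL_def geqD[OF comm x y] geqD[OF diss x y]
      by (simp add: site sum.distrib sum_subtractf sum_negf sum_distrib_left algebra_simps)
  qed
qed

section \<open>Sufficiency of the local conditions\<close>

lemma ptr_embed_Hpair:
  assumes d: "0 < d" and S: "S \<subseteq> {..<n}" and i: "i < n" and j: "j < n"
  shows "geq n d (ptr_embed n d S (Hpair n d H i j))
     (\<lambda>x y. ptr_embed n d (S \<inter> {i, j}) H x y - ptr_embed n d (S \<inter> {i}) H x y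
            - ptr_embed n d (S \<inter> {j}) H x y + ptr_embed n d {} H x y)"
  unfolding Hpair_def ptr_embed_add ptr_embed_diff
  using i j ptr_embed_ptr_embed[OF d S, of "{}"]
  by (intro geq_add geq_diff ptr_embed_ptr_embed[OF d S]) auto

lemma ptr_embed_Hpair_self:
  assumes d: "0 < d" and S: "S \<subseteq> {..<n}" and ij: "{i, j} \<subseteq> S"
  shows "geq n d (ptr_embed n d S (Hpair n d H i j)) (Hpair n d H i j)"
proof -
  have i: "i < n" "j < n"
    using ij S by auto
  have "S \<inter> {i, j} = {i, j}" "S \<inter> {i} = {i}" "S \<inter> {j} = {j}"
    using ij by auto
  then show ?thesis
    using ptr_embed_Hpair[OF d S i, of H] by (simp add: Hpair_def)
qed

lemma ptr_embed_Hpair_eq_0: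
  assumes d: "0 < d" and S: "S \<subseteq> {..<n}" and i: "i < n" and j: "j < n"
    and ij: "\<not> {i, j} \<subseteq> S"
  shows "geq n d (ptr_embed n d S (Hpair n d H i j)) (\<lambda>x y. 0)"
proof -
  have "S \<inter> {i, j} = S \<inter> {j} \<and> S \<inter> {i} = {} \<or> S \<inter> {i, j} = S \<inter> {i} \<and> S \<inter> {j} = {}"
    using ij by auto
  then show ?thesis
    using ptr_embed_Hpair[OF d S i j] by (auto simp: geq_def)
qed

lemma embed2_eq_tensor_split:
  assumes pq: "p \<noteq> q" "p < n" "q < n"
  shows "geq n d (embed2 n p q X X) (tensor_split n {p, q} X lid)"
proof (rule geqI)
  fix x y
  have "tensor_split n {p, q} X lid x y
      = (\<Prod>l\<in>{..<n} \<inter> {p, q}. X (x ! l) (y ! l)) * (\<Prod>l\<in>{..<n} \<inter> - {p, q}. lid (x ! l) (y ! l))"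
  proof -
    have "tensor_split n {p, q} X lid x y
        = (\<Prod>l<n. if l \<in> {p, q} then X (x ! l) (y ! l) else lid (x ! l) (y ! l))"
      unfolding tensor_split_def tensor_prod_def by (rule prod.cong) auto
    then show ?thesis
      by (simp only: prod.If_cases[OF finite_lessThan] Collect_mem_eq)
  qed
  also have "{..<n} \<inter> {p, q} = {p, q}"
    using pq by auto
  also have "(\<Prod>l\<in>{..<n} \<inter> - {p, q}. lid (x ! l) (y ! l)) = (if agree_off n {p, q} x y then 1 else 0)"
    unfolding lscalar_def prod_if_one_zero[OF finite_Int[OF disjI1[OF finite_lessThan]]]
    by (auto simp: agree_off_def)
  finally show "embed2 n p q X X x y = tensor_split n {p, q} X lid x y"
    using pq by (simp add: embed2_def)
qed

lemma gcomm_ptr_embed_tensor_pow: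
  assumes d: "0 < d" and S: "S \<subseteq> {..<n}"
  shows "geq n d (gcomm n d (ptr_embed n d S A) (tensor_pow n \<rho>))
           (gmult n d (gcomm n d (ptr_embed n d S A) (tensor_split n S \<rho> lid)) (tensor_split n S lid \<rho>))"
proof (rule glinear_eq_tensor_prod[OF glinear_comp[OF glinear_gcomm_left glinear_ptr_embed]
      glinear_comp[OF glinear_gmult_left glinear_comp[OF glinear_gcomm_left glinear_ptr_embed]]])
  fix f
  let ?F = "ptr_factors d S f"
  have "geq n d (gcomm n d (ptr_embed n d S (tensor_prod n f)) (tensor_pow n \<rho>))
                (gcomm n d (tensor_prod n ?F) (tensor_prod n (\<lambda>_. \<rho>)))"
    unfolding tensor_pow_eq_tensor_prod by (rule gcomm_cong_left[OF ptr_embed_tensor_prod[OF d S]])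
  also have "geq n d \<dots> (gmult n d (gcomm n d (tensor_prod n ?F) (tensor_split n S \<rho> lid)) (tensor_split n S lid \<rho>))"
    unfolding gcomm_def tensor_split_def gmult_diff_left gmult_tensor_prod
    by (intro geq_diff tensor_prod_cong) (auto simp: ptr_factors_def)
  also have "geq n d \<dots> (gmult n d (gcomm n d (ptr_embed n d S (tensor_prod n f)) (tensor_split n S \<rho> lid))
                                  (tensor_split n S lid \<rho>))"
    by (rule gmult_cong_left, rule gcomm_cong_left, rule geq_sym, rule ptr_embed_tensor_prod[OF d S])
  finally show "geq n d (gcomm n d (ptr_embed n d S (tensor_prod n f)) (tensor_pow n \<rho>))
      (gmult n d (gcomm n d (ptr_embed n d S (tensor_prod n f)) (tensor_split n S \<rho> lid)) (tensor_split n S lid \<rho>))" .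
qed

lemma gcomm_Hpair_tensor_pow:
  assumes d: "0 < d" and pq: "p < q" "q < n"
    and comm: "gzero n d (gcomm n d (Hpair n d H p q) (embed2 n p q \<rho> \<rho>))"
  shows "geq n d (gcomm n d (Hpair n d H p q) (tensor_pow n \<rho>)) (\<lambda>x y. 0)"
proof -
  let ?S = "{p, q}" and ?Hp = "Hpair n d H p q"
  have S: "?S \<subseteq> {..<n}"
    using pq by auto
  have loc: "geq n d (ptr_embed n d ?S ?Hp) ?Hp"
    by (rule ptr_embed_Hpair_self[OF d S]) simp
  have "geq n d (gcomm n d ?Hp (tensor_pow n \<rho>)) (gcomm n d (ptr_embed n d ?S ?Hp) (tensor_pow n \<rho>))"
    by (rule gcomm_cong_left[OF geq_sym[OF loc]])
  also have "geq n d \<dots> (gmult n d (gcomm n d (ptr_embed n d ?S ?Hp) (tensor_split n ?S \<rho> lid))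
                                  (tensor_split n ?S lid \<rho>))"
    by (rule gcomm_ptr_embed_tensor_pow[OF d S])
  also have "geq n d \<dots> (gmult n d (gcomm n d ?Hp (embed2 n p q \<rho> \<rho>)) (tensor_split n ?S lid \<rho>))"
    using pq by (intro gmult_cong_left geq_trans[OF gcomm_cong_left[OF loc] gcomm_cong_right]
        geq_sym[OF embed2_eq_tensor_split]) auto
  also have "geq n d \<dots> (gmult n d (\<lambda>x y. 0) (tensor_split n ?S lid \<rho>))"
    using comm by (intro gmult_cong_left) (simp add: geq_zero_iff_gzero)
  finally show ?thesis
    by simp
qed

lemma GKSL_tensor_pow_eq_0:
  assumes d: "0 < d" and L: "two_local n d H"
    and iii: "cond_iii n d H Gam Lop \<rho>" and iv: "cond_iv n d H \<rho>"
  shows "gzero n d (GKSL n d H Gam Lop (tensor_pow n \<rho>))"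
  unfolding geq_zero_iff_gzero[symmetric]
proof (rule geqI)
  fix x y assume x: "x \<in> cfgs n d" and y: "y \<in> cfgs n d"
  have "gcomm n d (Hpair n d H p q) (tensor_pow n \<rho>) x y = 0" if "(p, q) \<in> site_pairs n" for p q
    using that iv geqD[OF gcomm_Hpair_tensor_pow[OF d] x y] by (simp add: site_pairs_def cond_iv_def)
  moreover have "tensor_split n {p} (Lsite n d H Gam Lop p \<rho>) \<rho> x y = 0" if "p < n" for p
    using that iii x y by (simp add: tensor_split_site cond_iii_def lzero_def cfgs_nth)
  ultimately show "GKSL n d H Gam Lop (tensor_pow n \<rho>) x y = 0"
    unfolding geqD[OF GKSL_tensor_pow[OF d L] x y] by (auto intro!: sum.neutral)
qed

section \<open>Necessity of the local conditions for a full-rank state\<close>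

lemma ltr_Lsite: "ltr d (Lsite n d H Gam Lop p \<rho>) = 0"
proof -
  have "ltr d (Lsite n d H Gam Lop p \<rho>)
      = - \<i> * ltr d (lcomm d (Hsite n d H p) \<rho>) + (\<Sum>\<alpha>\<in>Gam p. ltr d (ldiss d (Lop p \<alpha>) \<rho>))"
  proof -
    have "ltr d (Lsite n d H Gam Lop p \<rho>) = (\<Sum>a<d. - \<i> * lcomm d (Hsite n d H p) \<rho> a a)
        + (\<Sum>a<d. \<Sum>\<alpha>\<in>Gam p. ldiss d (Lop p \<alpha>) \<rho> a a)"
      unfolding Lsite_def ltr_def by (rule sum.distrib)
    then show ?thesis
      by (simp add: ltr_def sum_distrib_left sum.swap[of _ "{..<d}"])
  qed
  then show ?thesis
    by simp
qed

lemma ltr_lmult_inverse: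
  assumes inv1: "\<And>a b. a < d \<Longrightarrow> b < d \<Longrightarrow> lmult d \<rho> \<tau> a b = lid a b"
    and inv2: "\<And>a b. a < d \<Longrightarrow> b < d \<Longrightarrow> lmult d \<tau> \<rho> a b = lid a b"
  shows "ltr d (lmult d (lmult d F \<rho>) \<tau>) = ltr d F" and "ltr d (lmult d (lmult d \<rho> F) \<tau>) = ltr d F"
proof -
  show "ltr d (lmult d (lmult d F \<rho>) \<tau>) = ltr d F"
    using lmult_inverse_cancel_right[OF inv1] by (intro ltr_cong) auto
  have "ltr d (lmult d (lmult d \<rho> F) \<tau>) = ltr d (lmult d (lmult d F \<tau>) \<rho>)"
    by (simp add: lmult_assoc ltr_lmult_commute[of d \<rho>])
  also have "\<dots> = ltr d F"
    using lmult_inverse_cancel_right[OF inv2] by (intro ltr_cong) auto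
  finally show "ltr d (lmult d (lmult d \<rho> F) \<tau>) = ltr d F" .
qed

text \<open>Weighting by \<open>\<rho>\<inverse>\<close> off \<open>S\<close> before tracing it out is what isolates the terms of the
  generator acting inside \<open>S\<close>.\<close>

lemma ptr_embed_weighted_gcomm_tensor_pow:
  assumes d: "0 < d" and S: "S \<subseteq> {..<n}"
    and inv1: "\<And>a b. a < d \<Longrightarrow> b < d \<Longrightarrow> lmult d \<rho> \<tau> a b = lid a b"
    and inv2: "\<And>a b. a < d \<Longrightarrow> b < d \<Longrightarrow> lmult d \<tau> \<rho> a b = lid a b"
  shows "geq n d (ptr_embed n d S (gmult n d (gcomm n d A (tensor_pow n \<rho>)) (tensor_split n S lid \<tau>)))
                 (gcomm n d (ptr_embed n d S A) (tensor_split n S \<rho> lid))"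
proof (rule glinear_eq_tensor_prod[OF glinear_comp[OF glinear_ptr_embed
      glinear_comp[OF glinear_gmult_left glinear_gcomm_left]] glinear_comp[OF glinear_gcomm_left glinear_ptr_embed]])
  fix f
  let ?R = "\<lambda>l. if l \<in> S then lid else \<tau>" and ?Q = "\<lambda>l. if l \<in> S then \<rho> else lid"
  have "geq n d (ptr_embed n d S (gmult n d (gcomm n d (tensor_prod n f) (tensor_pow n \<rho>)) (tensor_split n S lid \<tau>)))
     (\<lambda>x y. ptr_embed n d S (tensor_prod n (\<lambda>l. lmult d (lmult d (f l) \<rho>) (?R l))) x y
            - ptr_embed n d S (tensor_prod n (\<lambda>l. lmult d (lmult d \<rho> (f l)) (?R l))) x y)"
    by (simp add: tensor_pow_eq_tensor_prod gcomm_tensor_prod tensor_split_def gmult_diff_left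
        gmult_tensor_prod ptr_embed_diff)
  also have "geq n d \<dots> (\<lambda>x y. tensor_prod n (ptr_factors d S (\<lambda>l. lmult d (lmult d (f l) \<rho>) (?R l))) x y
            - tensor_prod n (ptr_factors d S (\<lambda>l. lmult d (lmult d \<rho> (f l)) (?R l))) x y)"
    by (intro geq_diff ptr_embed_tensor_prod[OF d S])
  also have "geq n d \<dots> (\<lambda>x y. tensor_prod n (\<lambda>l. lmult d (ptr_factors d S f l) (?Q l)) x y
            - tensor_prod n (\<lambda>l. lmult d (?Q l) (ptr_factors d S f l)) x y)"
    by (intro geq_diff tensor_prod_cong)
      (auto simp: ltr_lmult_inverse[OF inv1 inv2] lscalar_apply)
  also have "geq n d \<dots> (gcomm n d (ptr_embed n d S (tensor_prod n f)) (tensor_split n S \<rho> lid))"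
    unfolding tensor_split_def gcomm_tensor_prod[symmetric]
    by (rule gcomm_cong_left, rule geq_sym, rule ptr_embed_tensor_prod[OF d S])
  finally show "geq n d (ptr_embed n d S (gmult n d (gcomm n d (tensor_prod n f) (tensor_pow n \<rho>)) (tensor_split n S lid \<tau>)))
                 (gcomm n d (ptr_embed n d S (tensor_prod n f)) (tensor_split n S \<rho> lid))" .
qed

lemma ptr_embed_weighted_GKSL:
  assumes d: "0 < d" and L: "two_local n d H" and S: "S \<subseteq> {..<n}"
    and inv1: "\<And>a b. a < d \<Longrightarrow> b < d \<Longrightarrow> lmult d \<rho> \<tau> a b = lid a b"
    and inv2: "\<And>a b. a < d \<Longrightarrow> b < d \<Longrightarrow> lmult d \<tau> \<rho> a b = lid a b"
  shows "geq n d (ptr_embed n d S (gmult n d (GKSL n d H Gam Lop (tensor_pow n \<rho>)) (tensor_split n S lid \<tau>)))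
     (\<lambda>x y. - \<i> * (\<Sum>(p, q)\<in>site_pairs n.
                      gcomm n d (ptr_embed n d S (Hpair n d H p q)) (tensor_split n S \<rho> lid) x y)
            + (\<Sum>m<n. ptr_embed n d S (gmult n d (tensor_split n {m} (Lsite n d H Gam Lop m \<rho>) \<rho>)
                                                    (tensor_split n S lid \<tau>)) x y))"
proof -
  let ?\<Phi> = "\<lambda>G. ptr_embed n d S (gmult n d G (tensor_split n S lid \<tau>))"
  have "geq n d (?\<Phi> (GKSL n d H Gam Lop (tensor_pow n \<rho>)))
     (?\<Phi> (\<lambda>x y. - \<i> * (\<Sum>(p, q)\<in>site_pairs n. gcomm n d (Hpair n d H p q) (tensor_pow n \<rho>) x y)
                  + (\<Sum>m<n. tensor_split n {m} (Lsite n d H Gam Lop m \<rho>) \<rho> x y)))"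
    by (rule glinear_cong[OF glinear_comp[OF glinear_ptr_embed glinear_gmult_left] GKSL_tensor_pow[OF d L]])
  also have "\<dots> = (\<lambda>x y. - \<i> * (\<Sum>(p, q)\<in>site_pairs n. ?\<Phi> (gcomm n d (Hpair n d H p q) (tensor_pow n \<rho>)) x y)
                  + (\<Sum>m<n. ?\<Phi> (tensor_split n {m} (Lsite n d H Gam Lop m \<rho>) \<rho>) x y))"
    unfolding case_prod_beta
    by (simp only: gmult_add_left gmult_scale_left gmult_sum_left ptr_embed_add ptr_embed_scale
        ptr_embed_sum)
  also have "geq n d \<dots> (\<lambda>x y. - \<i> * (\<Sum>(p, q)\<in>site_pairs n.
                      gcomm n d (ptr_embed n d S (Hpair n d H p q)) (tensor_split n S \<rho> lid) x y)
            + (\<Sum>m<n. ?\<Phi> (tensor_split n {m} (Lsite n d H Gam Lop m \<rho>) \<rho>) x y))"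
    unfolding case_prod_beta
    by (intro geq_add geq_scale geq_refl geq_sum ptr_embed_weighted_gcomm_tensor_pow[OF d S inv1 inv2])
  finally show ?thesis .
qed

lemma ptr_embed_weighted_site_term:
  assumes d: "0 < d" and k: "k < n" and m: "m < n" and a: "a < d" and b: "b < d"
    and inv1: "\<And>a b. a < d \<Longrightarrow> b < d \<Longrightarrow> lmult d \<rho> \<tau> a b = lid a b"
  shows "ptr_embed n d {k} (gmult n d (tensor_split n {m} X \<rho>) (tensor_split n {k} lid \<tau>))
           ((replicate n 0)[k := a]) ((replicate n 0)[k := b])
       = (if m = k then X a b else \<rho> a b * (ltr d (lmult d X \<tau>) / of_nat d))"
proof -
  let ?x = "(replicate n 0)[k := a]" and ?y = "(replicate n 0)[k := b]"
  let ?g = "\<lambda>l. lmult d (if l \<in> {m} then X else \<rho>) (if l \<in> {k} then lid else \<tau>)"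
  have x: "?x \<in> cfgs n d" and y: "?y \<in> cfgs n d"
    using a b d k by (auto simp: mem_cfgs_iff nth_list_update)
  have "ptr_embed n d {k} (gmult n d (tensor_split n {m} X \<rho>) (tensor_split n {k} lid \<tau>)) ?x ?y
      = tensor_prod n (ptr_factors d {k} ?g) ?x ?y"
    unfolding tensor_split_def gmult_tensor_prod
    by (rule geqD[OF ptr_embed_tensor_prod[OF d] x y]) (use k in auto)
  also have "\<dots> = ptr_factors d {k} ?g k a b * (\<Prod>l\<in>{..<n}-{k}. ptr_factors d {k} ?g l 0 0)"
  proof -
    have "(\<Prod>l\<in>{..<n}-{k}. ptr_factors d {k} ?g l (?x ! l) (?y ! l))
        = (\<Prod>l\<in>{..<n}-{k}. ptr_factors d {k} ?g l 0 0)"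
      by (rule prod.cong) (auto simp: nth_list_update)
    then show ?thesis
      using k by (simp add: tensor_prod_remove[OF k] nth_list_update)
  qed
  also have "ptr_factors d {k} ?g k a b = (if m = k then X a b else \<rho> a b)"
    using b by simp
  also have "(\<Prod>l\<in>{..<n}-{k}. ptr_factors d {k} ?g l 0 0)
      = (\<Prod>l\<in>{..<n}-{k}. if l = m then ltr d (lmult d X \<tau>) / of_nat d else 1)"
  proof (rule prod.cong[OF refl])
    fix l assume "l \<in> {..<n}-{k}"
    moreover have "ltr d (lmult d \<rho> \<tau>) = of_nat d"
      using inv1 by (simp add: ltr_def lscalar_apply)
    ultimately show "ptr_factors d {k} ?g l 0 0 = (if l = m then ltr d (lmult d X \<tau>) / of_nat d else 1)"
      using d by (simp add: lscalar_apply)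
  qed
  also have "\<dots> = (if m = k then 1 else ltr d (lmult d X \<tau>) / of_nat d)"
    using m by (simp add: prod.delta)
  finally show ?thesis
    by simp
qed

lemma sum_gcomm_ptr_embed_Hpair_site:
  assumes d: "0 < d" and k: "k < n" and x: "x \<in> cfgs n d" and y: "y \<in> cfgs n d"
  shows "(\<Sum>(p, q)\<in>site_pairs n. gcomm n d (ptr_embed n d {k} (Hpair n d H p q)) B x y) = 0"
proof (intro sum.neutral ballI)
  fix pq assume "pq \<in> site_pairs n"
  then obtain i j where pq: "pq = (i, j)" "i < j" "j < n"
    by (auto simp: site_pairs_def)
  then have "geq n d (ptr_embed n d {k} (Hpair n d H i j)) (\<lambda>x y. 0)"
    using k by (intro ptr_embed_Hpair_eq_0[OF d]) auto
  then show "(case pq of (p, q) \<Rightarrow> gcomm n d (ptr_embed n d {k} (Hpair n d H p q)) B x y) = 0"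
    using geqD[OF gcomm_cong_left x y] pq by simp
qed

lemma sum_gcomm_ptr_embed_Hpair_pair:
  assumes d: "0 < d" and pq: "p < q" "q < n" and x: "x \<in> cfgs n d" and y: "y \<in> cfgs n d"
  shows "(\<Sum>(i, j)\<in>site_pairs n. gcomm n d (ptr_embed n d {p, q} (Hpair n d H i j)) B x y)
       = gcomm n d (Hpair n d H p q) B x y"
proof -
  have S: "{p, q} \<subseteq> {..<n}"
    using pq by auto
  have "(\<Sum>(i, j)\<in>site_pairs n.
          gcomm n d (ptr_embed n d {p, q} (Hpair n d H i j)) B x y)
      = (\<Sum>ij\<in>site_pairs n. if ij = (p, q) then gcomm n d (Hpair n d H p q) B x y else 0)"
  proof (rule sum.cong[OF refl])
    fix ij assume "ij \<in> site_pairs n"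
    then obtain i j where ij: "ij = (i, j)" "i < j" "j < n"
      by (auto simp: site_pairs_def)
    show "(case ij of (i, j) \<Rightarrow>
            gcomm n d (ptr_embed n d {p, q} (Hpair n d H i j)) B x y)
        = (if ij = (p, q) then gcomm n d (Hpair n d H p q) B x y else 0)"
    proof (cases "ij = (p, q)")
      case True
      have "geq n d (ptr_embed n d {p, q} (Hpair n d H p q)) (Hpair n d H p q)"
        by (rule ptr_embed_Hpair_self[OF d S]) simp
      then show ?thesis
        using geqD[OF gcomm_cong_left x y] ij True by simp
    next
      case False
      then have "\<not> {i, j} \<subseteq> {p, q}"
        using ij pq by auto
      then have "geq n d (ptr_embed n d {p, q} (Hpair n d H i j)) (\<lambda>x y. 0)"
        using ij by (intro ptr_embed_Hpair_eq_0[OF d S]) auto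
      then show ?thesis
        using geqD[OF gcomm_cong_left x y] ij False by auto
    qed
  qed
  also have "\<dots> = (if (p, q) \<in> site_pairs n then gcomm n d (Hpair n d H p q) B x y else 0)"
    by (rule sum.delta[OF finite_site_pairs])
  also have "\<dots> = gcomm n d (Hpair n d H p q) B x y"
    using pq by (simp add: site_pairs_def)
  finally show ?thesis .
qed

lemma ptr_embed_weighted_GKSL_eq_0:
  assumes d: "0 < d" and L: "two_local n d H" and S: "S \<subseteq> {..<n}"
    and inv1: "\<And>a b. a < d \<Longrightarrow> b < d \<Longrightarrow> lmult d \<rho> \<tau> a b = lid a b"
    and inv2: "\<And>a b. a < d \<Longrightarrow> b < d \<Longrightarrow> lmult d \<tau> \<rho> a b = lid a b"
    and stat: "gzero n d (GKSL n d H Gam Lop (tensor_pow n \<rho>))"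
    and x: "x \<in> cfgs n d" and y: "y \<in> cfgs n d"
  shows "- \<i> * (\<Sum>(p, q)\<in>site_pairs n.
                  gcomm n d (ptr_embed n d S (Hpair n d H p q)) (tensor_split n S \<rho> lid) x y)
         + (\<Sum>m<n. ptr_embed n d S (gmult n d (tensor_split n {m} (Lsite n d H Gam Lop m \<rho>) \<rho>)
                                                (tensor_split n S lid \<tau>)) x y) = 0"
proof -
  have "geq n d (ptr_embed n d S (gmult n d (GKSL n d H Gam Lop (tensor_pow n \<rho>)) (tensor_split n S lid \<tau>)))
                (ptr_embed n d S (gmult n d (\<lambda>x y. 0) (tensor_split n S lid \<tau>)))"
    using stat unfolding geq_zero_iff_gzero[symmetric]
    by (intro ptr_embed_cong gmult_cong_left)
  then have zero: "ptr_embed n d S (gmult n d (GKSL n d H Gam Lop (tensor_pow n \<rho>))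
                                         (tensor_split n S lid \<tau>)) x y = 0"
    using x y by (simp add: geq_def)
  have "ptr_embed n d S (gmult n d (GKSL n d H Gam Lop (tensor_pow n \<rho>)) (tensor_split n S lid \<tau>)) x y
      = - \<i> * (\<Sum>(p, q)\<in>site_pairs n.
                  gcomm n d (ptr_embed n d S (Hpair n d H p q)) (tensor_split n S \<rho> lid) x y)
        + (\<Sum>m<n. ptr_embed n d S (gmult n d (tensor_split n {m} (Lsite n d H Gam Lop m \<rho>) \<rho>)
                                                (tensor_split n S lid \<tau>)) x y)"
    by (rule geqD[OF ptr_embed_weighted_GKSL[OF d L S inv1 inv2] x y])
  with zero show ?thesis
    by simp
qed

lemma Lsite_eq_0_of_GKSL_tensor_pow_eq_0:
  assumes d: "0 < d" and L: "two_local n d H"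
    and inv1: "\<And>a b. a < d \<Longrightarrow> b < d \<Longrightarrow> lmult d \<rho> \<tau> a b = lid a b"
    and inv2: "\<And>a b. a < d \<Longrightarrow> b < d \<Longrightarrow> lmult d \<tau> \<rho> a b = lid a b"
    and tr: "ltr d \<rho> = 1" and stat: "gzero n d (GKSL n d H Gam Lop (tensor_pow n \<rho>))"
    and k: "k < n"
  shows "lzero d (Lsite n d H Gam Lop k \<rho>)"
proof -
  let ?L = "\<lambda>m. Lsite n d H Gam Lop m \<rho>"
  define c where "c = (\<Sum>m\<in>{..<n}-{k}. ltr d (lmult d (?L m) \<tau>) / of_nat d)"
  have S: "{k} \<subseteq> {..<n}"
    using k by simp
  have entry: "?L k a b + \<rho> a b * c = 0" if a: "a < d" and b: "b < d" for a b
  proof -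
    let ?x = "(replicate n 0)[k := a]" and ?y = "(replicate n 0)[k := b]"
    have x: "?x \<in> cfgs n d" and y: "?y \<in> cfgs n d"
      using a b d k by (auto simp: mem_cfgs_iff nth_list_update)
    have "0 = (\<Sum>m<n. ptr_embed n d {k} (gmult n d (tensor_split n {m} (?L m) \<rho>)
                                                (tensor_split n {k} lid \<tau>)) ?x ?y)"
      using ptr_embed_weighted_GKSL_eq_0[OF d L S inv1 inv2 stat x y]
      by (simp add: sum_gcomm_ptr_embed_Hpair_site[OF d k x y])
    also have "\<dots> = (\<Sum>m<n. if m = k then ?L k a b else \<rho> a b * (ltr d (lmult d (?L m) \<tau>) / of_nat d))"
      by (intro sum.cong refl) (simp add: ptr_embed_weighted_site_term[OF d k _ a b inv1])
    also have "\<dots> = ?L k a b + \<rho> a b * c"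
      using k by (simp add: sum.remove[of "{..<n}" k] c_def sum_distrib_left)
    finally show ?thesis
      by simp
  qed
  have "(\<Sum>a<d. ?L k a a + \<rho> a a * c) = 0"
    using entry by simp
  then have "ltr d (?L k) + ltr d \<rho> * c = 0"
    by (simp add: ltr_def sum.distrib sum_distrib_right)
  then have "c = 0"
    using tr ltr_Lsite[of d n H Gam Lop k \<rho>] by simp
  then show ?thesis
    using entry by (simp add: lzero_def)
qed

lemma Hpair_commute_of_GKSL_tensor_pow_eq_0:
  assumes d: "0 < d" and L: "two_local n d H"
    and inv1: "\<And>a b. a < d \<Longrightarrow> b < d \<Longrightarrow> lmult d \<rho> \<tau> a b = lid a b"
    and inv2: "\<And>a b. a < d \<Longrightarrow> b < d \<Longrightarrow> lmult d \<tau> \<rho> a b = lid a b"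
    and stat: "gzero n d (GKSL n d H Gam Lop (tensor_pow n \<rho>))"
    and sites: "\<And>m. m < n \<Longrightarrow> lzero d (Lsite n d H Gam Lop m \<rho>)"
    and pq: "p < q" "q < n"
  shows "gzero n d (gcomm n d (Hpair n d H p q) (embed2 n p q \<rho> \<rho>))"
  unfolding geq_zero_iff_gzero[symmetric]
proof (rule geqI)
  fix x y assume x: "x \<in> cfgs n d" and y: "y \<in> cfgs n d"
  let ?S = "{p, q}" and ?C = "gcomm n d (Hpair n d H p q) (tensor_split n {p, q} \<rho> lid)"
  have S: "?S \<subseteq> {..<n}"
    using pq by auto
  have "ptr_embed n d ?S (gmult n d (tensor_split n {m} (Lsite n d H Gam Lop m \<rho>) \<rho>)
                                   (tensor_split n ?S lid \<tau>)) x y = 0" if m: "m < n" for m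
  proof -
    have "geq n d (tensor_split n {m} (Lsite n d H Gam Lop m \<rho>) \<rho>) (\<lambda>x y. 0)"
      using sites[OF m] m by (auto simp: geq_def tensor_split_site cfgs_nth lzero_def)
    then show ?thesis
      using geqD[OF ptr_embed_cong[OF gmult_cong_left] x y] by simp
  qed
  then have "?C x y = 0"
    using ptr_embed_weighted_GKSL_eq_0[OF d L S inv1 inv2 stat x y]
    by (simp add: sum_gcomm_ptr_embed_Hpair_pair[OF d pq x y])
  then show "gcomm n d (Hpair n d H p q) (embed2 n p q \<rho> \<rho>) x y = 0"
    using pq geqD[OF gcomm_cong_right[OF embed2_eq_tensor_split] x y] by simp
qed

lemma local_conditions_of_GKSL_tensor_pow_eq_0:
  assumes d: "0 < d" and L: "two_local n d H"
    and inv1: "\<And>a b. a < d \<Longrightarrow> b < d \<Longrightarrow> lmult d \<rho> \<tau> a b = lid a b"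
    and inv2: "\<And>a b. a < d \<Longrightarrow> b < d \<Longrightarrow> lmult d \<tau> \<rho> a b = lid a b"
    and tr: "ltr d \<rho> = 1" and stat: "gzero n d (GKSL n d H Gam Lop (tensor_pow n \<rho>))"
  shows "cond_iii n d H Gam Lop \<rho> \<and> cond_iv n d H \<rho>"
proof
  have sites: "\<And>m. m < n \<Longrightarrow> lzero d (Lsite n d H Gam Lop m \<rho>)"
    by (rule Lsite_eq_0_of_GKSL_tensor_pow_eq_0[OF d L inv1 inv2 tr stat])
  then show "cond_iii n d H Gam Lop \<rho>"
    by (simp add: cond_iii_def)
  show "cond_iv n d H \<rho>"
    unfolding cond_iv_def
    using Hpair_commute_of_GKSL_tensor_pow_eq_0[OF d L inv1 inv2 stat sites] by blast
qed

lemma det_ne_0_of_no_zero_eigenvalue: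
  assumes nz: "\<forall>\<mu>. leigenvalue d \<rho> \<mu> \<longrightarrow> \<mu> \<noteq> 0"
  shows "det (mat d d (\<lambda>(a, b). \<rho> a b)) \<noteq> 0"
proof
  let ?A = "mat d d (\<lambda>(a, b). \<rho> a b)"
  assume "det ?A = 0"
  then obtain v where v: "v \<in> carrier_vec d" "v \<noteq> 0\<^sub>v d" "?A *\<^sub>v v = 0\<^sub>v d"
    using det_0_iff_vec_prod_zero_field[of ?A d] by auto
  have "\<exists>b<d. v $ b \<noteq> 0"
    using v(1,2) by auto
  moreover have "(\<Sum>b<d. \<rho> a b * v $ b) = 0 * v $ a" if a: "a < d" for a
  proof -
    have "(?A *\<^sub>v v) $ a = 0"
      using v a by simp
    then show ?thesis
      using a v by (simp add: mult_mat_vec_def scalar_prod_def atLeast0LessThan)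
  qed
  ultimately have "leigenvalue d \<rho> 0"
    unfolding leigenvalue_def by blast
  then show False
    using nz by blast
qed

lemma lmult_inverse_of_no_zero_eigenvalue:
  assumes nz: "\<forall>\<mu>. leigenvalue d \<rho> \<mu> \<longrightarrow> \<mu> \<noteq> 0"
  obtains \<tau> where "\<And>a b. a < d \<Longrightarrow> b < d \<Longrightarrow> lmult d \<rho> \<tau> a b = lid a b"
    and "\<And>a b. a < d \<Longrightarrow> b < d \<Longrightarrow> lmult d \<tau> \<rho> a b = lid a b"
proof -
  define A where "A = mat d d (\<lambda>(a, b). \<rho> a b)"
  have A: "A \<in> carrier_mat d d"
    by (simp add: A_def)
  obtain B where B: "B \<in> carrier_mat d d" "B * A = 1\<^sub>m d" "A * B = 1\<^sub>m d"
    using det_non_zero_imp_unit[OF A det_ne_0_of_no_zero_eigenvalue[OF nz, folded A_def], of "()"]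
    unfolding Units_def ring_mat_def by auto
  define \<tau> where "\<tau> = (\<lambda>a b. if a < d \<and> b < d then B $$ (a, b) else 0)"
  show thesis
  proof
    fix a b assume ab: "a < d" "b < d"
    have "lmult d \<rho> \<tau> a b = (A * B) $$ (a, b)"
      using ab B(1) by (simp add: lmult_def \<tau>_def A_def scalar_prod_def atLeast0LessThan)
    then show "lmult d \<rho> \<tau> a b = lid a b"
      using ab B(3) by (simp add: lscalar_apply)
    have "lmult d \<tau> \<rho> a b = (B * A) $$ (a, b)"
      using ab B(1) by (simp add: lmult_def \<tau>_def A_def scalar_prod_def atLeast0LessThan)
    then show "lmult d \<tau> \<rho> a b = lid a b"
      using ab B(2) by (simp add: lscalar_apply)
  qed
qed

theorem lemma2:
  fixes n d :: nat and H :: gop and Gam :: "nat \<Rightarrow> 'g set" and Lop :: "nat \<Rightarrow> 'g \<Rightarrow> lop"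
    and \<rho> :: lop
  assumes herm: "ghermitian n d H"
    and local2: "two_local n d H"
    and finGam: "\<forall>i<n. finite (Gam i)"
    and dens: "is_density d \<rho>"
  shows "((\<forall>\<mu>. leigenvalue d \<rho> \<mu> \<longrightarrow> \<mu> \<noteq> 0) \<longrightarrow>
            (gzero n d (GKSL n d H Gam Lop (tensor_pow n \<rho>)) \<longleftrightarrow>
               cond_iii n d H Gam Lop \<rho> \<and> cond_iv n d H \<rho>))
       \<and> (cond_iii n d H Gam Lop \<rho> \<and> cond_iv n d H \<rho> \<longrightarrow>
            gzero n d (GKSL n d H Gam Lop (tensor_pow n \<rho>)))"
proof -
  have "(\<Sum>a<d. \<rho> a a) = 1"
    using dens unfolding is_density_def by (elim conjE)
  then have tr: "ltr d \<rho> = 1"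
    by (simp add: ltr_def)
  then have d: "0 < d"
    by (cases "d = 0") (simp_all add: ltr_def)
  have "cond_iii n d H Gam Lop \<rho> \<and> cond_iv n d H \<rho> \<longrightarrow>
      gzero n d (GKSL n d H Gam Lop (tensor_pow n \<rho>))"
    using GKSL_tensor_pow_eq_0[OF d local2] by blast
  moreover have "cond_iii n d H Gam Lop \<rho> \<and> cond_iv n d H \<rho>"
    if nz: "\<forall>\<mu>. leigenvalue d \<rho> \<mu> \<longrightarrow> \<mu> \<noteq> 0"
      and stat: "gzero n d (GKSL n d H Gam Lop (tensor_pow n \<rho>))"
  proof -
    obtain \<tau> where "\<And>a b. a < d \<Longrightarrow> b < d \<Longrightarrow> lmult d \<rho> \<tau> a b = lid a b"
      and "\<And>a b. a < d \<Longrightarrow> b < d \<Longrightarrow> lmult d \<tau> \<rho> a b = lid a b"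
      using lmult_inverse_of_no_zero_eigenvalue[OF nz] by blast
    then show ?thesis
      by (rule local_conditions_of_GKSL_tensor_pow_eq_0[OF d local2 _ _ tr stat])
  qed
  ultimately show ?thesis
    by blast
qed

end
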